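(* Let $\mathcal C$ be a small abelian (or, more generally, Quillen exact) category with a tensor product that is exact in each variable and has a tensor identity $e$. Suppose either that the tensor product is commutative, or that there is an object $c\in\mathcal C$ such that no proper thick subcategory of $\mathcal C$ contains $c$. Then the set $L_{\mathrm{thick}}(\mathcal C)$ of thick tensor ideals of $\mathcal C$, ordered by inclusion and with product $(\mathcal D_1,\mathcal D_2)\mapsto\langle\mathcal D_1\mathcal D_2\rangle$, is an ideal lattice. Moreover, a thick tensor ideal is compact in this lattice if and only if it is of the form $\langle x\rangle$ for a single object $x$.
   Context: A tensor product on an additive category $\mathcal C$ is an additive bifunctor $\otimes\colon\mathcal C\times\mathcal C\to\mathcal C$ with a natural associativity isomorphism; a tensor identity $e$ comes with natural isomorphisms $x\otimes e\cong x\cong e\otimes x$ satisfying the pentagon and triangle axioms. A subcategory $\mathcal D$ is thick if for every exact sequence $0\to x'\to x\to x''\to0$, $x\in\mathcal D$ iff $x',x''\in\mathcal D$. A tensor ideal is a full additive subcategory $\mathcal D$ with $x\otimes y\in\mathcal D$ whenever $x\in\mathcal D$ or $y\in\mathcal D$. $\langle\mathcal D_0\rangle$ denotes the smallest thick tensor ideal containing a class $\mathcal D_0$; $\mathcal D_1\mathcal D_2$ denotes the class of finite coproducts of objects $x\otimes y$ with $x\in\mathcal D_1,y\in\mathcal D_2$ (up to isomorphism). An ideal lattice is a poset $(L,\leq)$ with an associative multiplication such that: (L1) $L$ is a complete lattice; (L2) every element is a supremum of compact elements ($a$ is compact if $a\leq\sup A$ implies $a\leq\sup A'$ for some finite $A'\subseteq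 A$); (L3) multiplication distributes over binary joins on both sides; (L4) $1=\sup L$ is compact and is a two-sided identity; (L5) products of compact elements are compact. *)

theory Defs
  imports Main
begin

text \<open>Objects have type 'o, morphisms type 'm.  The category is small automatically
(objects form a set).  cmp g f is the composite g after f.\<close>

record ('o, 'm) tcat =
  Ob :: "'o set"
  Hom :: "'o \<Rightarrow> 'o \<Rightarrow> 'm set"
  cmp :: "'m \<Rightarrow> 'm \<Rightarrow> 'm"
  idm :: "'o \<Rightarrow> 'm"
  madd :: "'m \<Rightarrow> 'm \<Rightarrow> 'm"
  mzero :: "'o \<Rightarrow> 'o \<Rightarrow> 'm"
  Conf :: "'m \<Rightarrow> 'm \<Rightarrow> bool"           \<comment> \<open>conflations (admissible short exact sequences)\<close>
  tob :: "'o \<Rightarrow> 'o \<Rightarrow> 'o"            \<comment> \<open>tensor on objects\<close>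
  tmo :: "'m \<Rightarrow> 'm \<Rightarrow> 'm"            \<comment> \<open>tensor on morphisms\<close>
  asc :: "'o \<Rightarrow> 'o \<Rightarrow> 'o \<Rightarrow> 'm"      \<comment> \<open>associator (x*y)*z -> x*(y*z)\<close>
  tunit :: "'o"                        \<comment> \<open>tensor identity e\<close>
  runit :: "'o \<Rightarrow> 'm"                 \<comment> \<open>x*e -> x\<close>
  lunit :: "'o \<Rightarrow> 'm"                 \<comment> \<open>e*x -> x\<close>

definition category :: "('o,'m,'z) tcat_scheme \<Rightarrow> bool" where
  "category C \<longleftrightarrow>
     (\<forall>x y. Hom C x y \<noteq> {} \<longrightarrow> x \<in> Ob C \<and> y \<in> Ob C) \<and>
     (\<forall>x y x' y' f. f \<in> Hom C x y \<and> f \<in> Hom C x' y' \<longrightarrow> x = x' \<and> y = y') \<and>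
     (\<forall>x\<in>Ob C. idm C x \<in> Hom C x x) \<and>
     (\<forall>x y z f g. f \<in> Hom C x y \<and> g \<in> Hom C y z \<longrightarrow> cmp C g f \<in> Hom C x z) \<and>
     (\<forall>x y f. f \<in> Hom C x y \<longrightarrow> cmp C f (idm C x) = f \<and> cmp C (idm C y) f = f) \<and>
     (\<forall>w x y z f g h. f \<in> Hom C w x \<and> g \<in> Hom C x y \<and> h \<in> Hom C y z \<longrightarrow>
        cmp C h (cmp C g f) = cmp C (cmp C h g) f)"

definition preadditive :: "('o,'m,'z) tcat_scheme \<Rightarrow> bool" where
  "preadditive C \<longleftrightarrow> category C \<and>
     (\<forall>x\<in>Ob C. \<forall>y\<in>Ob C.
        mzero C x y \<in> Hom C x y \<and>
        (\<forall>f\<in>Hom C x y. \<forall>g\<in>Hom C x y. madd C f g \<in> Hom C x y \<and> madd C f g = madd C g f) \<and>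
        (\<forall>f\<in>Hom C x y. \<forall>g\<in>Hom C x y. \<forall>h\<in>Hom C x y. madd C (madd C f g) h = madd C f (madd C g h)) \<and>
        (\<forall>f\<in>Hom C x y. madd C f (mzero C x y) = f) \<and>
        (\<forall>f\<in>Hom C x y. \<exists>g\<in>Hom C x y. madd C f g = mzero C x y)) \<and>
     (\<forall>x y z f g h. f \<in> Hom C x y \<and> g \<in> Hom C x y \<and> h \<in> Hom C y z \<longrightarrow>
        cmp C h (madd C f g) = madd C (cmp C h f) (cmp C h g)) \<and>
     (\<forall>x y z f g h. f \<in> Hom C y z \<and> g \<in> Hom C y z \<and> h \<in> Hom C x y \<longrightarrow>
        cmp C (madd C f g) h = madd C (cmp C f h) (cmp C g h))"

definition iso :: "('o,'m,'z) tcat_scheme \<Rightarrow> 'm \<Rightarrow> 'o \<Rightarrow> 'o \<Rightarrow> bool" where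
  "iso C f x y \<longleftrightarrow> f \<in> Hom C x y \<and>
     (\<exists>g\<in>Hom C y x. cmp C g f = idm C x \<and> cmp C f g = idm C y)"

definition isomorphic :: "('o,'m,'z) tcat_scheme \<Rightarrow> 'o \<Rightarrow> 'o \<Rightarrow> bool" where
  "isomorphic C x y \<longleftrightarrow> (\<exists>f. iso C f x y)"

definition is_zero_obj :: "('o,'m,'z) tcat_scheme \<Rightarrow> 'o \<Rightarrow> bool" where
  "is_zero_obj C z \<longleftrightarrow> z \<in> Ob C \<and>
     (\<forall>x\<in>Ob C. (\<exists>!f. f \<in> Hom C z x) \<and> (\<exists>!f. f \<in> Hom C x z))"

definition is_coprod :: "('o,'m,'z) tcat_scheme \<Rightarrow> 'o \<Rightarrow> 'o \<Rightarrow> 'o \<Rightarrow> 'm \<Rightarrow> 'm \<Rightarrow> bool" where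
  "is_coprod C a b z i j \<longleftrightarrow> i \<in> Hom C a z \<and> j \<in> Hom C b z \<and>
     (\<forall>w\<in>Ob C. \<forall>f\<in>Hom C a w. \<forall>g\<in>Hom C b w.
        \<exists>!h. h \<in> Hom C z w \<and> cmp C h i = f \<and> cmp C h j = g)"

definition additive :: "('o,'m,'z) tcat_scheme \<Rightarrow> bool" where
  "additive C \<longleftrightarrow> preadditive C \<and> (\<exists>z. is_zero_obj C z) \<and>
     (\<forall>a\<in>Ob C. \<forall>b\<in>Ob C. \<exists>z i j. is_coprod C a b z i j)"

definition is_kernel :: "('o,'m,'z) tcat_scheme \<Rightarrow> 'm \<Rightarrow> 'o \<Rightarrow> 'o \<Rightarrow> 'm \<Rightarrow> 'o \<Rightarrow> bool" where
  "is_kernel C f x y i k \<longleftrightarrow> f \<in> Hom C x y \<and> i \<in> Hom C k x \<and> cmp C f i = mzero C k y \<and>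
     (\<forall>w\<in>Ob C. \<forall>h\<in>Hom C w x. cmp C f h = mzero C w y \<longrightarrow>
        (\<exists>!u. u \<in> Hom C w k \<and> cmp C i u = h))"

definition is_cokernel :: "('o,'m,'z) tcat_scheme \<Rightarrow> 'm \<Rightarrow> 'o \<Rightarrow> 'o \<Rightarrow> 'm \<Rightarrow> 'o \<Rightarrow> bool" where
  "is_cokernel C f x y p c \<longleftrightarrow> f \<in> Hom C x y \<and> p \<in> Hom C y c \<and> cmp C p f = mzero C x c \<and>
     (\<forall>w\<in>Ob C. \<forall>h\<in>Hom C y w. cmp C h f = mzero C x w \<longrightarrow>
        (\<exists>!u. u \<in> Hom C c w \<and> cmp C u p = h))"

definition kc_pair :: "('o,'m,'z) tcat_scheme \<Rightarrow> 'o \<Rightarrow> 'o \<Rightarrow> 'o \<Rightarrow> 'm \<Rightarrow> 'm \<Rightarrow> bool" where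
  "kc_pair C a b c i p \<longleftrightarrow> is_kernel C p b c i a \<and> is_cokernel C i a b p c"

definition conflation :: "('o,'m,'z) tcat_scheme \<Rightarrow> 'o \<Rightarrow> 'o \<Rightarrow> 'o \<Rightarrow> 'm \<Rightarrow> 'm \<Rightarrow> bool" where
  "conflation C a b c i p \<longleftrightarrow> Conf C i p \<and> i \<in> Hom C a b \<and> p \<in> Hom C b c"

definition adm_mono :: "('o,'m,'z) tcat_scheme \<Rightarrow> 'm \<Rightarrow> bool" where
  "adm_mono C i \<longleftrightarrow> (\<exists>p. Conf C i p)"

definition adm_epi :: "('o,'m,'z) tcat_scheme \<Rightarrow> 'm \<Rightarrow> bool" where
  "adm_epi C p \<longleftrightarrow> (\<exists>i. Conf C i p)"

definition is_pushout :: "('o,'m,'z) tcat_scheme \<Rightarrow> 'o \<Rightarrow> 'o \<Rightarrow> 'o \<Rightarrow> 'o \<Rightarrow> 'm \<Rightarrow> 'm \<Rightarrow> 'm \<Rightarrow> 'm \<Rightarrow> bool" where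
  "is_pushout C a b a' b' i f i' f' \<longleftrightarrow>
     i \<in> Hom C a b \<and> f \<in> Hom C a a' \<and> i' \<in> Hom C a' b' \<and> f' \<in> Hom C b b' \<and>
     cmp C f' i = cmp C i' f \<and>
     (\<forall>w\<in>Ob C. \<forall>g\<in>Hom C b w. \<forall>g'\<in>Hom C a' w. cmp C g i = cmp C g' f \<longrightarrow>
        (\<exists>!u. u \<in> Hom C b' w \<and> cmp C u f' = g \<and> cmp C u i' = g'))"

definition is_pullback :: "('o,'m,'z) tcat_scheme \<Rightarrow> 'o \<Rightarrow> 'o \<Rightarrow> 'o \<Rightarrow> 'o \<Rightarrow> 'm \<Rightarrow> 'm \<Rightarrow> 'm \<Rightarrow> 'm \<Rightarrow> bool" where
  "is_pullback C b c b' c' p f p' f' \<longleftrightarrow>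
     p \<in> Hom C b c \<and> f \<in> Hom C c' c \<and> p' \<in> Hom C b' c' \<and> f' \<in> Hom C b' b \<and>
     cmp C p f' = cmp C f p' \<and>
     (\<forall>w\<in>Ob C. \<forall>g\<in>Hom C w b. \<forall>g'\<in>Hom C w c'. cmp C p g = cmp C f g' \<longrightarrow>
        (\<exists>!u. u \<in> Hom C w b' \<and> cmp C f' u = g \<and> cmp C p' u = g'))"

text \<open>Quillen exact structure (axioms as in Buehler, Exact categories, Def. 2.1).\<close>
definition exact_structure :: "('o,'m,'z) tcat_scheme \<Rightarrow> bool" where
  "exact_structure C \<longleftrightarrow>
     (\<forall>i p. Conf C i p \<longrightarrow> (\<exists>a b c. kc_pair C a b c i p)) \<and>
     \<comment> \<open>closed under isomorphisms of kernel-cokernel pairs\<close>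
     (\<forall>a b c a' b' c' i p i' p' u v w.
        conflation C a b c i p \<and> i' \<in> Hom C a' b' \<and> p' \<in> Hom C b' c' \<and>
        iso C u a' a \<and> iso C v b' b \<and> iso C w c' c \<and>
        cmp C v i' = cmp C i u \<and> cmp C w p' = cmp C p v \<longrightarrow> Conf C i' p') \<and>
     (\<forall>x\<in>Ob C. adm_mono C (idm C x)) \<and>
     (\<forall>x\<in>Ob C. adm_epi C (idm C x)) \<and>
     (\<forall>a b c i j. i \<in> Hom C a b \<and> j \<in> Hom C b c \<and> adm_mono C i \<and> adm_mono C j \<longrightarrow>
        adm_mono C (cmp C j i)) \<and>
     (\<forall>a b c p q. p \<in> Hom C a b \<and> q \<in> Hom C b c \<and> adm_epi C p \<and> adm_epi C q \<longrightarrow>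
        adm_epi C (cmp C q p)) \<and>
     (\<forall>a b a' i f. i \<in> Hom C a b \<and> adm_mono C i \<and> f \<in> Hom C a a' \<longrightarrow>
        (\<exists>b' i' f'. is_pushout C a b a' b' i f i' f' \<and> adm_mono C i')) \<and>
     (\<forall>b c c' p f. p \<in> Hom C b c \<and> adm_epi C p \<and> f \<in> Hom C c' c \<longrightarrow>
        (\<exists>b' p' f'. is_pullback C b c b' c' p f p' f' \<and> adm_epi C p'))"

definition exact_category :: "('o,'m,'z) tcat_scheme \<Rightarrow> bool" where
  "exact_category C \<longleftrightarrow> additive C \<and> exact_structure C"

definition tensor_structure :: "('o,'m,'z) tcat_scheme \<Rightarrow> bool" where
  "tensor_structure C \<longleftrightarrow>
     (\<forall>x\<in>Ob C. \<forall>y\<in>Ob C. tob C x y \<in> Ob C) \<and>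
     (\<forall>x x' y y' f g. f \<in> Hom C x x' \<and> g \<in> Hom C y y' \<longrightarrow>
        tmo C f g \<in> Hom C (tob C x y) (tob C x' y')) \<and>
     (\<forall>x\<in>Ob C. \<forall>y\<in>Ob C. tmo C (idm C x) (idm C y) = idm C (tob C x y)) \<and>
     (\<forall>x x' x'' y y' y'' f f' g g'. f \<in> Hom C x x' \<and> f' \<in> Hom C x' x'' \<and>
        g \<in> Hom C y y' \<and> g' \<in> Hom C y' y'' \<longrightarrow>
        tmo C (cmp C f' f) (cmp C g' g) = cmp C (tmo C f' g') (tmo C f g)) \<and>
     \<comment> \<open>additivity in each variable\<close>
     (\<forall>x x' y y' f1 f2 g. f1 \<in> Hom C x x' \<and> f2 \<in> Hom C x x' \<and> g \<in> Hom C y y' \<longrightarrow>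
        tmo C (madd C f1 f2) g = madd C (tmo C f1 g) (tmo C f2 g)) \<and>
     (\<forall>x x' y y' f g1 g2. f \<in> Hom C x x' \<and> g1 \<in> Hom C y y' \<and> g2 \<in> Hom C y y' \<longrightarrow>
        tmo C f (madd C g1 g2) = madd C (tmo C f g1) (tmo C f g2)) \<and>
     \<comment> \<open>natural associativity isomorphism\<close>
     (\<forall>x\<in>Ob C. \<forall>y\<in>Ob C. \<forall>z\<in>Ob C.
        iso C (asc C x y z) (tob C (tob C x y) z) (tob C x (tob C y z))) \<and>
     (\<forall>x x' y y' z z' f g h. f \<in> Hom C x x' \<and> g \<in> Hom C y y' \<and> h \<in> Hom C z z' \<longrightarrow>
        cmp C (asc C x' y' z') (tmo C (tmo C f g) h) =
        cmp C (tmo C f (tmo C g h)) (asc C x y z)) \<and>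
     \<comment> \<open>tensor identity\<close>
     tunit C \<in> Ob C \<and>
     (\<forall>x\<in>Ob C. iso C (runit C x) (tob C x (tunit C)) x \<and>
                iso C (lunit C x) (tob C (tunit C) x) x) \<and>
     (\<forall>x x' f. f \<in> Hom C x x' \<longrightarrow>
        cmp C (runit C x') (tmo C f (idm C (tunit C))) = cmp C f (runit C x) \<and>
        cmp C (lunit C x') (tmo C (idm C (tunit C)) f) = cmp C f (lunit C x)) \<and>
     \<comment> \<open>pentagon\<close>
     (\<forall>x\<in>Ob C. \<forall>y\<in>Ob C. \<forall>z\<in>Ob C. \<forall>w\<in>Ob C.
        cmp C (asc C x y (tob C z w)) (asc C (tob C x y) z w) =
        cmp C (tmo C (idm C x) (asc C y z w))
          (cmp C (asc C x (tob C y z) w) (tmo C (asc C x y z) (idm C w)))) \<and>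
     \<comment> \<open>triangle\<close>
     (\<forall>x\<in>Ob C. \<forall>y\<in>Ob C.
        cmp C (tmo C (idm C x) (lunit C y)) (asc C x (tunit C) y) =
        tmo C (runit C x) (idm C y)) \<and>
     \<comment> \<open>exact in each variable: preserves conflations\<close>
     (\<forall>i p y. (\<exists>a b c. conflation C a b c i p) \<and> y \<in> Ob C \<longrightarrow>
        Conf C (tmo C i (idm C y)) (tmo C p (idm C y)) \<and>
        Conf C (tmo C (idm C y) i) (tmo C (idm C y) p))"

definition exact_tensor_category :: "('o,'m,'z) tcat_scheme \<Rightarrow> bool" where
  "exact_tensor_category C \<longleftrightarrow> exact_category C \<and> tensor_structure C"

definition tensor_commutative :: "('o,'m,'z) tcat_scheme \<Rightarrow> bool" where
  "tensor_commutative C \<longleftrightarrow> (\<exists>\<sigma>.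
     (\<forall>x\<in>Ob C. \<forall>y\<in>Ob C. iso C (\<sigma> x y) (tob C x y) (tob C y x)) \<and>
     (\<forall>x x' y y' f g. f \<in> Hom C x x' \<and> g \<in> Hom C y y' \<longrightarrow>
        cmp C (\<sigma> x' y') (tmo C f g) = cmp C (tmo C g f) (\<sigma> x y)))"

section \<open>Thick tensor ideals\<close>

definition thick :: "('o,'m,'z) tcat_scheme \<Rightarrow> 'o set \<Rightarrow> bool" where
  "thick C D \<longleftrightarrow> D \<subseteq> Ob C \<and>
     (\<forall>a b c i p. conflation C a b c i p \<longrightarrow> (b \<in> D \<longleftrightarrow> a \<in> D \<and> c \<in> D))"

definition additive_subcat :: "('o,'m,'z) tcat_scheme \<Rightarrow> 'o set \<Rightarrow> bool" where
  "additive_subcat C D \<longleftrightarrow> D \<subseteq> Ob C \<and> (\<exists>z\<in>D. is_zero_obj C z) \<and>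
     (\<forall>a b z i j. a \<in> D \<and> b \<in> D \<and> is_coprod C a b z i j \<longrightarrow> z \<in> D)"

definition tensor_ideal :: "('o,'m,'z) tcat_scheme \<Rightarrow> 'o set \<Rightarrow> bool" where
  "tensor_ideal C D \<longleftrightarrow> additive_subcat C D \<and>
     (\<forall>x\<in>Ob C. \<forall>y\<in>Ob C. x \<in> D \<or> y \<in> D \<longrightarrow> tob C x y \<in> D)"

definition thick_tensor_ideal :: "('o,'m,'z) tcat_scheme \<Rightarrow> 'o set \<Rightarrow> bool" where
  "thick_tensor_ideal C D \<longleftrightarrow> thick C D \<and> tensor_ideal C D"

definition gen :: "('o,'m,'z) tcat_scheme \<Rightarrow> 'o set \<Rightarrow> 'o set" where
  "gen C D0 = \<Inter>{D. thick_tensor_ideal C D \<and> D0 \<subseteq> D}"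

inductive_set fincop :: "('o,'m,'z) tcat_scheme \<Rightarrow> 'o set \<Rightarrow> 'o set"
  for C :: "('o,'m,'z) tcat_scheme" and S :: "'o set" where
  zero: "is_zero_obj C z \<Longrightarrow> z \<in> fincop C S"
| step: "a \<in> fincop C S \<Longrightarrow> b \<in> S \<Longrightarrow> is_coprod C a b z i j \<Longrightarrow> z \<in> fincop C S"

definition tprod_class :: "('o,'m,'z) tcat_scheme \<Rightarrow> 'o set \<Rightarrow> 'o set \<Rightarrow> 'o set" where
  "tprod_class C D1 D2 = fincop C {tob C x y | x y. x \<in> D1 \<and> y \<in> D2}"

definition tprod :: "('o,'m,'z) tcat_scheme \<Rightarrow> 'o set \<Rightarrow> 'o set \<Rightarrow> 'o set" where
  "tprod C D1 D2 = gen C (tprod_class C D1 D2)"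

definition Lthick :: "('o,'m,'z) tcat_scheme \<Rightarrow> 'o set set" where
  "Lthick C = {D. thick_tensor_ideal C D}"

section \<open>Ideal lattices (on a carrier set L with order le and multiplication mult)\<close>

definition is_sup :: "'a set \<Rightarrow> ('a \<Rightarrow> 'a \<Rightarrow> bool) \<Rightarrow> 'a set \<Rightarrow> 'a \<Rightarrow> bool" where
  "is_sup L le A s \<longleftrightarrow> s \<in> L \<and> (\<forall>a\<in>A. le a s) \<and> (\<forall>b\<in>L. (\<forall>a\<in>A. le a b) \<longrightarrow> le s b)"

definition lsup :: "'a set \<Rightarrow> ('a \<Rightarrow> 'a \<Rightarrow> bool) \<Rightarrow> 'a set \<Rightarrow> 'a" where
  "lsup L le A = (THE s. is_sup L le A s)"

definition poset_on :: "'a set \<Rightarrow> ('a \<Rightarrow> 'a \<Rightarrow> bool) \<Rightarrow> bool" where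
  "poset_on L le \<longleftrightarrow> (\<forall>a\<in>L. le a a) \<and> (\<forall>a\<in>L. \<forall>b\<in>L. le a b \<and> le b a \<longrightarrow> a = b) \<and>
     (\<forall>a\<in>L. \<forall>b\<in>L. \<forall>c\<in>L. le a b \<and> le b c \<longrightarrow> le a c)"

definition compact_el :: "'a set \<Rightarrow> ('a \<Rightarrow> 'a \<Rightarrow> bool) \<Rightarrow> 'a \<Rightarrow> bool" where
  "compact_el L le a \<longleftrightarrow> a \<in> L \<and>
     (\<forall>A. A \<subseteq> L \<and> le a (lsup L le A) \<longrightarrow> (\<exists>A'. A' \<subseteq> A \<and> finite A' \<and> le a (lsup L le A')))"

definition ideal_lattice :: "'a set \<Rightarrow> ('a \<Rightarrow> 'a \<Rightarrow> bool) \<Rightarrow> ('a \<Rightarrow> 'a \<Rightarrow> 'a) \<Rightarrow> bool" where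
  "ideal_lattice L le mult \<longleftrightarrow>
     poset_on L le \<and>
     (\<forall>a\<in>L. \<forall>b\<in>L. mult a b \<in> L) \<and>
     (\<forall>a\<in>L. \<forall>b\<in>L. \<forall>c\<in>L. mult (mult a b) c = mult a (mult b c)) \<and>
     \<comment> \<open>(L1) complete lattice\<close>
     (\<forall>A. A \<subseteq> L \<longrightarrow> (\<exists>s. is_sup L le A s)) \<and>
     \<comment> \<open>(L2) every element is a supremum of compact elements\<close>
     (\<forall>a\<in>L. \<exists>A. A \<subseteq> {c. compact_el L le c} \<and> a = lsup L le A) \<and>
     \<comment> \<open>(L3) distributivity over binary joins\<close>
     (\<forall>a\<in>L. \<forall>b\<in>L. \<forall>c\<in>L.
        mult a (lsup L le {b, c}) = lsup L le {mult a b, mult a c} \<and>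
        mult (lsup L le {a, b}) c = lsup L le {mult a c, mult b c}) \<and>
     \<comment> \<open>(L4) 1 = sup L is compact and a two-sided identity\<close>
     compact_el L le (lsup L le L) \<and>
     (\<forall>a\<in>L. mult (lsup L le L) a = a \<and> mult a (lsup L le L) = a) \<and>
     \<comment> \<open>(L5) products of compact elements are compact\<close>
     (\<forall>a b. compact_el L le a \<and> compact_el L le b \<longrightarrow> compact_el L le (mult a b))"

end

(*
  Thick tensor ideals are closed under intersections and directed unions, so they form an
  algebraic lattice with join <UNION A> and with the finitely generated ideals as compact
  elements.  Every finitely generated ideal is principal: for objects x1, x2 there is a
  conflation x1' -> B -> x2 with x1' isomorphic to x1, and a thick subcategory contains B iff
  it contains x1 and x2.

  Since the tensor product is exact in each variable, the residuals {u. u * c \<subseteq> E} and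
  {v. a * v \<subseteq> E} of a thick tensor ideal E are again thick tensor ideals.  Hence
  <D1 D2> \<subseteq> E iff x * y \<in> E for all x \<in> D1, y \<in> D2, from which associativity,
  distributivity and the unit law follow.  Finally <x><y> \<subseteq> E iff (x * w) * y \<in> E for
  every object w; for a commutative tensor product this says x * y \<in> E, and for an object c
  generating C as a thick subcategory it says (x * c) * y \<in> E.  So products of principal
  ideals are principal, i.e. products of compact elements are compact.
*)

theory Submission
  imports Defs
begin

section \<open>Generated thick tensor ideals\<close>

lemma gen_subset: "S \<subseteq> gen C S"
  unfolding gen_def by blast

lemma subset_Union_gen_singletons: "D \<subseteq> (\<Union>x\<in>D. gen C {x})"
  unfolding gen_def by blast

lemma gen_minimal: "thick_tensor_ideal C E \<Longrightarrow> S \<subseteq> E \<Longrightarrow> gen C S \<subseteq> E"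
  unfolding gen_def by blast

lemma gen_subset_iff: "thick_tensor_ideal C E \<Longrightarrow> gen C S \<subseteq> E \<longleftrightarrow> S \<subseteq> E"
  by (meson gen_minimal gen_subset order_trans)

lemma gen_mono: "S \<subseteq> T \<Longrightarrow> gen C S \<subseteq> gen C T"
  unfolding gen_def by (intro Inter_anti_mono) blast

lemma gen_thick_tensor_ideal: "thick_tensor_ideal C D \<Longrightarrow> gen C D = D"
  using gen_minimal gen_subset by (metis order_refl subset_antisym)

lemma gen_eqI:
  assumes "\<And>E. thick_tensor_ideal C E \<Longrightarrow> S \<subseteq> E \<longleftrightarrow> T \<subseteq> E"
  shows "gen C S = gen C T"
proof -
  have "{D. thick_tensor_ideal C D \<and> S \<subseteq> D} = {D. thick_tensor_ideal C D \<and> T \<subseteq> D}"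
    using assms by blast
  then show ?thesis
    unfolding gen_def by simp
qed

lemma thick_tensor_ideal_eqI:
  assumes "thick_tensor_ideal C X" "thick_tensor_ideal C Y"
    and "\<And>E. thick_tensor_ideal C E \<Longrightarrow> X \<subseteq> E \<longleftrightarrow> Y \<subseteq> E"
  shows "X = Y"
  using assms by (meson order_refl subset_antisym)

lemma thick_tensor_ideal_subset: "thick_tensor_ideal C D \<Longrightarrow> D \<subseteq> Ob C"
  unfolding thick_tensor_ideal_def thick_def by blast

lemma thick_tensor_ideal_thick: "thick_tensor_ideal C D \<Longrightarrow> thick C D"
  unfolding thick_tensor_ideal_def by blast

lemma thick_tensor_ideal_tob_left:
  assumes "thick_tensor_ideal C D" "x \<in> Ob C" "y \<in> D"
  shows "tob C x y \<in> D"
  using assms thick_tensor_ideal_subset[OF assms(1)]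
  unfolding thick_tensor_ideal_def tensor_ideal_def by blast

lemma thick_tensor_ideal_tob_right:
  assumes "thick_tensor_ideal C D" "x \<in> D" "y \<in> Ob C"
  shows "tob C x y \<in> D"
  using assms thick_tensor_ideal_subset[OF assms(1)]
  unfolding thick_tensor_ideal_def tensor_ideal_def by blast

lemma is_sup_subset_unique: "is_sup L (\<subseteq>) A s \<Longrightarrow> is_sup L (\<subseteq>) A t \<Longrightarrow> s = t"
  unfolding is_sup_def by (meson subset_antisym)

section \<open>Preadditive categories and additive endofunctors\<close>

locale preadditive_cat =
  fixes C :: "('o, 'm, 'z) tcat_scheme"
  assumes preadditive: "preadditive C"
begin

lemma category: "category C"
  using preadditive unfolding preadditive_def by (elim conjE)

lemma hom_dom: "f \<in> Hom C x y \<Longrightarrow> x \<in> Ob C"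
  and hom_cod: "f \<in> Hom C x y \<Longrightarrow> y \<in> Ob C"
  using category unfolding category_def by (metis empty_iff)+

lemma hom_unique: "f \<in> Hom C x y \<Longrightarrow> f \<in> Hom C x' y' \<Longrightarrow> x = x' \<and> y = y'"
  using category unfolding category_def by (elim conjE) meson

lemma idm_hom: "x \<in> Ob C \<Longrightarrow> idm C x \<in> Hom C x x"
  using category unfolding category_def by (elim conjE) meson

lemma cmp_hom: "f \<in> Hom C x y \<Longrightarrow> g \<in> Hom C y z \<Longrightarrow> cmp C g f \<in> Hom C x z"
  using category unfolding category_def by (elim conjE) meson

lemma cmp_idm_right: "f \<in> Hom C x y \<Longrightarrow> cmp C f (idm C x) = f"
  and cmp_idm_left: "f \<in> Hom C x y \<Longrightarrow> cmp C (idm C y) f = f"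
  using category unfolding category_def by (elim conjE; meson)+

lemma cmp_assoc:
  "f \<in> Hom C w x \<Longrightarrow> g \<in> Hom C x y \<Longrightarrow> h \<in> Hom C y z \<Longrightarrow>
    cmp C h (cmp C g f) = cmp C (cmp C h g) f"
  using category unfolding category_def by (elim conjE) meson

lemma mzero_hom: "x \<in> Ob C \<Longrightarrow> y \<in> Ob C \<Longrightarrow> mzero C x y \<in> Hom C x y"
  using preadditive unfolding preadditive_def by (elim conjE) meson

lemma madd_hom: "f \<in> Hom C x y \<Longrightarrow> g \<in> Hom C x y \<Longrightarrow> madd C f g \<in> Hom C x y"
  and madd_commute: "f \<in> Hom C x y \<Longrightarrow> g \<in> Hom C x y \<Longrightarrow> madd C f g = madd C g f"
  and madd_mzero_right: "f \<in> Hom C x y \<Longrightarrow> madd C f (mzero C x y) = f"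
  and madd_inverse: "f \<in> Hom C x y \<Longrightarrow> \<exists>g\<in>Hom C x y. madd C f g = mzero C x y"
  using preadditive hom_dom hom_cod unfolding preadditive_def by (elim conjE; meson)+

lemma madd_assoc:
  "f \<in> Hom C x y \<Longrightarrow> g \<in> Hom C x y \<Longrightarrow> h \<in> Hom C x y \<Longrightarrow>
    madd C (madd C f g) h = madd C f (madd C g h)"
  using preadditive hom_dom hom_cod unfolding preadditive_def by (elim conjE) meson

lemma cmp_madd_left:
  "f \<in> Hom C x y \<Longrightarrow> g \<in> Hom C x y \<Longrightarrow> h \<in> Hom C y z \<Longrightarrow>
    cmp C h (madd C f g) = madd C (cmp C h f) (cmp C h g)"
  using preadditive unfolding preadditive_def by (elim conjE) meson

lemma cmp_madd_right:
  "f \<in> Hom C y z \<Longrightarrow> g \<in> Hom C y z \<Longrightarrow> h \<in> Hom C x y \<Longrightarrow>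
    cmp C (madd C f g) h = madd C (cmp C f h) (cmp C g h)"
  using preadditive unfolding preadditive_def by (elim conjE) meson

lemma madd_mzero_left: "f \<in> Hom C x y \<Longrightarrow> madd C (mzero C x y) f = f"
  by (metis madd_commute madd_mzero_right mzero_hom hom_dom hom_cod)

lemma madd_idem_eq_mzero:
  assumes t: "t \<in> Hom C x y" and idem: "madd C t t = t"
  shows "t = mzero C x y"
proof -
  obtain g where g: "g \<in> Hom C x y" "madd C t g = mzero C x y"
    using madd_inverse[OF t] by blast
  have "t = madd C t (madd C t g)"
    using g madd_mzero_right[OF t] by simp
  also have "\<dots> = madd C (madd C t t) g"
    using madd_assoc[OF t t g(1)] by simp
  also have "\<dots> = mzero C x y"
    using idem g(2) by simp
  finally show ?thesis .
qed

lemma cmp_mzero_left: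
  assumes h: "h \<in> Hom C x y" and z: "z \<in> Ob C"
  shows "cmp C (mzero C y z) h = mzero C x z"
proof (rule madd_idem_eq_mzero)
  have 0: "mzero C y z \<in> Hom C y z"
    using mzero_hom hom_cod[OF h] z by blast
  then show "cmp C (mzero C y z) h \<in> Hom C x z"
    using cmp_hom h by blast
  show "madd C (cmp C (mzero C y z) h) (cmp C (mzero C y z) h) = cmp C (mzero C y z) h"
    using cmp_madd_right[OF 0 0 h] madd_mzero_right[OF 0] by simp
qed

lemma cmp_mzero_right:
  assumes h: "h \<in> Hom C y z" and x: "x \<in> Ob C"
  shows "cmp C h (mzero C x y) = mzero C x z"
proof (rule madd_idem_eq_mzero)
  have 0: "mzero C x y \<in> Hom C x y"
    using mzero_hom hom_dom[OF h] x by blast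
  then show "cmp C h (mzero C x y) \<in> Hom C x z"
    using cmp_hom h by blast
  show "madd C (cmp C h (mzero C x y)) (cmp C h (mzero C x y)) = cmp C h (mzero C x y)"
    using cmp_madd_left[OF 0 0 h] madd_mzero_right[OF 0] by simp
qed

lemma iso_hom: "iso C f x y \<Longrightarrow> f \<in> Hom C x y"
  unfolding iso_def by blast

lemma iso_inverse: "iso C f x y \<Longrightarrow> \<exists>g. iso C g y x"
  unfolding iso_def by blast

lemma iso_idm: "x \<in> Ob C \<Longrightarrow> iso C (idm C x) x x"
  unfolding iso_def using idm_hom cmp_idm_left by blast

lemma zero_obj_Ob: "is_zero_obj C z \<Longrightarrow> z \<in> Ob C"
  unfolding is_zero_obj_def by blast

lemma zero_obj_hom_unique:
  assumes z: "is_zero_obj C z"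
  shows "f \<in> Hom C z x \<Longrightarrow> g \<in> Hom C z x \<Longrightarrow> f = g"
    and "f \<in> Hom C x z \<Longrightarrow> g \<in> Hom C x z \<Longrightarrow> f = g"
proof -
  assume f: "f \<in> Hom C z x" and g: "g \<in> Hom C z x"
  have "\<exists>!f. f \<in> Hom C z x"
    using z hom_cod[OF f] unfolding is_zero_obj_def by blast
  then show "f = g"
    using f g by blast
next
  assume f: "f \<in> Hom C x z" and g: "g \<in> Hom C x z"
  have "\<exists>!f. f \<in> Hom C x z"
    using z hom_dom[OF f] unfolding is_zero_obj_def by blast
  then show "f = g"
    using f g by blast
qed

lemma zero_obj_iff_idm_mzero:
  assumes z: "z \<in> Ob C"
  shows "is_zero_obj C z \<longleftrightarrow> idm C z = mzero C z z"
proof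
  assume "is_zero_obj C z"
  then show "idm C z = mzero C z z"
    using zero_obj_hom_unique(1) idm_hom mzero_hom z by metis
next
  assume idm: "idm C z = mzero C z z"
  have out: "f = mzero C z x" if "f \<in> Hom C z x" for f x
    using cmp_idm_right[OF that] cmp_mzero_right[OF that z] idm by simp
  have into: "f = mzero C x z" if "f \<in> Hom C x z" for f x
    using cmp_idm_left[OF that] cmp_mzero_left[OF that z] idm by simp
  show "is_zero_obj C z"
    unfolding is_zero_obj_def using out into mzero_hom z by blast
qed

lemma zero_obj_iso:
  assumes z: "is_zero_obj C z" and z': "is_zero_obj C z'"
  shows "\<exists>f. iso C f z z'"
proof -
  have Ob: "z \<in> Ob C" "z' \<in> Ob C"
    using z z' zero_obj_Ob by blast+
  have "cmp C (mzero C z' z) (mzero C z z') = idm C z"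
    by (rule zero_obj_hom_unique(1)[OF z]) (use cmp_hom mzero_hom idm_hom Ob in blast)+
  moreover have "cmp C (mzero C z z') (mzero C z' z) = idm C z'"
    by (rule zero_obj_hom_unique(1)[OF z']) (use cmp_hom mzero_hom idm_hom Ob in blast)+
  ultimately show ?thesis
    unfolding iso_def using mzero_hom Ob by blast
qed

lemma coprod_hom_eqI:
  assumes cp: "is_coprod C a b w i j" and h: "h \<in> Hom C w t" and k: "k \<in> Hom C w t"
    and "cmp C h i = cmp C k i" "cmp C h j = cmp C k j"
  shows "h = k"
proof -
  have ij: "i \<in> Hom C a w" "j \<in> Hom C b w"
    using cp unfolding is_coprod_def by auto
  have "\<exists>!u. u \<in> Hom C w t \<and> cmp C u i = cmp C h i \<and> cmp C u j = cmp C h j"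
    using cp hom_cod[OF h] cmp_hom[OF ij(1) h] cmp_hom[OF ij(2) h]
    unfolding is_coprod_def by blast
  then show ?thesis
    using assms(2-) by auto
qed

lemma coprod_Ob: "is_coprod C a b w i j \<Longrightarrow> w \<in> Ob C"
  unfolding is_coprod_def using hom_cod by blast

definition is_biprod :: "'o \<Rightarrow> 'o \<Rightarrow> 'o \<Rightarrow> 'm \<Rightarrow> 'm \<Rightarrow> 'm \<Rightarrow> 'm \<Rightarrow> bool" where
  "is_biprod a b w i j p q \<longleftrightarrow>
     i \<in> Hom C a w \<and> j \<in> Hom C b w \<and> p \<in> Hom C w a \<and> q \<in> Hom C w b \<and>
     cmp C p i = idm C a \<and> cmp C p j = mzero C b a \<and>
     cmp C q i = mzero C a b \<and> cmp C q j = idm C b \<and>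
     madd C (cmp C i p) (cmp C j q) = idm C w"

lemma coprod_imp_biprod:
  assumes cp: "is_coprod C a b w i j"
  shows "\<exists>p q. is_biprod a b w i j p q"
proof -
  have ij: "i \<in> Hom C a w" "j \<in> Hom C b w"
    using cp unfolding is_coprod_def by auto
  have Ob: "a \<in> Ob C" "b \<in> Ob C" "w \<in> Ob C"
    using ij hom_dom hom_cod by blast+
  obtain p where p: "p \<in> Hom C w a" "cmp C p i = idm C a" "cmp C p j = mzero C b a"
    using cp Ob idm_hom mzero_hom unfolding is_coprod_def by blast
  obtain q where q: "q \<in> Hom C w b" "cmp C q i = mzero C a b" "cmp C q j = idm C b"
    using cp Ob idm_hom mzero_hom unfolding is_coprod_def by blast
  have ip: "cmp C i p \<in> Hom C w w" and jq: "cmp C j q \<in> Hom C w w"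
    using cmp_hom ij p q by blast+
  let ?s = "madd C (cmp C i p) (cmp C j q)"
  have "cmp C ?s i = madd C (cmp C i (cmp C p i)) (cmp C j (cmp C q i))"
    using cmp_madd_right[OF ip jq ij(1)] cmp_assoc[OF ij(1) p(1) ij(1)]
      cmp_assoc[OF ij(1) q(1) ij(2)] by simp
  also have "\<dots> = i"
    using p(2) q(2) cmp_idm_right[OF ij(1)] cmp_mzero_right[OF ij(2) Ob(1)]
      madd_mzero_right[OF ij(1)] by simp
  finally have si: "cmp C ?s i = cmp C (idm C w) i"
    using cmp_idm_left[OF ij(1)] by simp
  have "cmp C ?s j = madd C (cmp C i (cmp C p j)) (cmp C j (cmp C q j))"
    using cmp_madd_right[OF ip jq ij(2)] cmp_assoc[OF ij(2) p(1) ij(1)]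
      cmp_assoc[OF ij(2) q(1) ij(2)] by simp
  also have "\<dots> = j"
    using p(3) q(3) cmp_idm_right[OF ij(2)] cmp_mzero_right[OF ij(1) Ob(2)]
      madd_mzero_left[OF ij(2)] by simp
  finally have sj: "cmp C ?s j = cmp C (idm C w) j"
    using cmp_idm_left[OF ij(2)] by simp
  have "?s = idm C w"
    using coprod_hom_eqI[OF cp madd_hom[OF ip jq] idm_hom[OF Ob(3)] si sj] .
  then show ?thesis
    unfolding is_biprod_def using ij p q by blast
qed

lemma is_biprodD:
  assumes "is_biprod a b w i j p q"
  shows "i \<in> Hom C a w" "j \<in> Hom C b w" "p \<in> Hom C w a" "q \<in> Hom C w b"
    "cmp C p i = idm C a" "cmp C p j = mzero C b a"
    "cmp C q i = mzero C a b" "cmp C q j = idm C b"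
    "madd C (cmp C i p) (cmp C j q) = idm C w"
  using assms unfolding is_biprod_def by auto

lemma biprod_imp_coprod:
  assumes bp: "is_biprod a b w i j p q"
  shows "is_coprod C a b w i j"
proof -
  note i = is_biprodD(1)[OF bp] and j = is_biprodD(2)[OF bp]
    and p = is_biprodD(3)[OF bp] and q = is_biprodD(4)[OF bp]
  have a: "a \<in> Ob C" and b: "b \<in> Ob C"
    using i j hom_dom by blast+
  have "\<exists>!h. h \<in> Hom C w t \<and> cmp C h i = f \<and> cmp C h j = g"
    if f: "f \<in> Hom C a t" and g: "g \<in> Hom C b t" for t f g
  proof
    let ?h = "madd C (cmp C f p) (cmp C g q)"
    have fp: "cmp C f p \<in> Hom C w t" and gq: "cmp C g q \<in> Hom C w t"
      using cmp_hom p q f g by blast+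
    have "cmp C ?h i = madd C (cmp C f (cmp C p i)) (cmp C g (cmp C q i))"
      using cmp_madd_right[OF fp gq i] cmp_assoc[OF i p f] cmp_assoc[OF i q g] by simp
    also have "\<dots> = f"
      using is_biprodD(5,7)[OF bp] cmp_idm_right[OF f] cmp_mzero_right[OF g a]
        madd_mzero_right[OF f] by simp
    finally have hi: "cmp C ?h i = f" .
    have "cmp C ?h j = madd C (cmp C f (cmp C p j)) (cmp C g (cmp C q j))"
      using cmp_madd_right[OF fp gq j] cmp_assoc[OF j p f] cmp_assoc[OF j q g] by simp
    also have "\<dots> = g"
      using is_biprodD(6,8)[OF bp] cmp_idm_right[OF g] cmp_mzero_right[OF f b]
        madd_mzero_left[OF g] by simp
    finally have hj: "cmp C ?h j = g" .
    show "?h \<in> Hom C w t \<and> cmp C ?h i = f \<and> cmp C ?h j = g"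
      using madd_hom[OF fp gq] hi hj by blast
    fix k assume "k \<in> Hom C w t \<and> cmp C k i = f \<and> cmp C k j = g"
    then have k: "k \<in> Hom C w t" and ki: "cmp C k i = f" and kj: "cmp C k j = g"
      by blast+
    have ip: "cmp C i p \<in> Hom C w w" and jq: "cmp C j q \<in> Hom C w w"
      using cmp_hom i j p q by blast+
    have "k = cmp C k (madd C (cmp C i p) (cmp C j q))"
      using is_biprodD(9)[OF bp] cmp_idm_right k by metis
    also have "\<dots> = ?h"
      using cmp_madd_left[OF ip jq k] cmp_assoc[OF p i k] cmp_assoc[OF q j k] ki kj by simp
    finally show "k = ?h" .
  qed
  then show ?thesis
    unfolding is_coprod_def using i j by blast
qed

lemma coprod_zero_left_iso:
  assumes z: "is_zero_obj C z" and cp: "is_coprod C z s w i j"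
  shows "iso C j s w"
proof -
  obtain p q where bp: "is_biprod z s w i j p q"
    using coprod_imp_biprod[OF cp] by blast
  note i = is_biprodD(1)[OF bp] and j = is_biprodD(2)[OF bp]
    and p = is_biprodD(3)[OF bp] and q = is_biprodD(4)[OF bp]
  have w: "w \<in> Ob C"
    using i hom_cod by blast
  have "p = mzero C w z"
    using zero_obj_hom_unique(2)[OF z p] mzero_hom w zero_obj_Ob[OF z] by blast
  then have "cmp C i p = mzero C w w"
    using cmp_mzero_right[OF i w] by simp
  then have "cmp C j q = idm C w"
    using is_biprodD(9)[OF bp] madd_mzero_left cmp_hom[OF q j] by metis
  then show ?thesis
    unfolding iso_def using is_biprodD(8)[OF bp] j q by blast
qed

end

locale additive_endofunctor = preadditive_cat C for C :: "('o, 'm, 'z) tcat_scheme" +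
  fixes F :: "'o \<Rightarrow> 'o" and Fm :: "'m \<Rightarrow> 'm"
  assumes map_hom: "f \<in> Hom C x y \<Longrightarrow> Fm f \<in> Hom C (F x) (F y)"
    and map_idm: "x \<in> Ob C \<Longrightarrow> Fm (idm C x) = idm C (F x)"
    and map_cmp: "f \<in> Hom C x y \<Longrightarrow> g \<in> Hom C y z \<Longrightarrow> Fm (cmp C g f) = cmp C (Fm g) (Fm f)"
    and map_madd: "f \<in> Hom C x y \<Longrightarrow> g \<in> Hom C x y \<Longrightarrow> Fm (madd C f g) = madd C (Fm f) (Fm g)"
begin

lemma map_Ob: "x \<in> Ob C \<Longrightarrow> F x \<in> Ob C"
  using map_hom idm_hom hom_dom by blast

lemma map_mzero:
  assumes "x \<in> Ob C" "y \<in> Ob C"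
  shows "Fm (mzero C x y) = mzero C (F x) (F y)"
proof (rule madd_idem_eq_mzero)
  have 0: "mzero C x y \<in> Hom C x y"
    using mzero_hom assms by blast
  then show "Fm (mzero C x y) \<in> Hom C (F x) (F y)"
    using map_hom by blast
  show "madd C (Fm (mzero C x y)) (Fm (mzero C x y)) = Fm (mzero C x y)"
    using map_madd[OF 0 0] madd_mzero_right[OF 0] by simp
qed

lemma map_iso: "iso C f x y \<Longrightarrow> iso C (Fm f) (F x) (F y)"
  unfolding iso_def by (metis map_hom map_cmp map_idm hom_dom)

lemma map_zero_obj: "is_zero_obj C z \<Longrightarrow> is_zero_obj C (F z)"
  using zero_obj_iff_idm_mzero zero_obj_Ob map_Ob map_idm map_mzero by metis

lemma map_coprod:
  assumes "is_coprod C a b w i j"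
  shows "is_coprod C (F a) (F b) (F w) (Fm i) (Fm j)"
proof -
  obtain p q where bp: "is_biprod a b w i j p q"
    using coprod_imp_biprod[OF assms] by blast
  note i = is_biprodD(1)[OF bp] and j = is_biprodD(2)[OF bp]
    and p = is_biprodD(3)[OF bp] and q = is_biprodD(4)[OF bp]
  have Ob: "a \<in> Ob C" "b \<in> Ob C" "w \<in> Ob C"
    using i j hom_dom hom_cod by blast+
  have "madd C (cmp C (Fm i) (Fm p)) (cmp C (Fm j) (Fm q)) = Fm (madd C (cmp C i p) (cmp C j q))"
    using map_madd[OF cmp_hom[OF p i] cmp_hom[OF q j]] map_cmp[OF p i] map_cmp[OF q j] by simp
  then have "is_biprod (F a) (F b) (F w) (Fm i) (Fm j) (Fm p) (Fm q)"
    unfolding is_biprod_def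
    using map_hom[OF i] map_hom[OF j] map_hom[OF p] map_hom[OF q]
      map_cmp[OF i p] map_cmp[OF j p] map_cmp[OF i q] map_cmp[OF j q] is_biprodD(5-9)[OF bp]
      map_idm map_mzero Ob by simp
  then show ?thesis
    using biprod_imp_coprod by blast
qed

end

section \<open>Thick subcategories of exact categories\<close>

locale exact_endofunctor = additive_endofunctor +
  assumes map_conflation:
    "conflation C a b c i p \<Longrightarrow> conflation C (F a) (F b) (F c) (Fm i) (Fm p)"

locale exact_cat =
  fixes C :: "('o, 'm, 'z) tcat_scheme"
  assumes exact_category: "exact_category C"

sublocale exact_cat \<subseteq> preadditive_cat
  using exact_category unfolding exact_category_def additive_def
  by unfold_locales (elim conjE)

context exact_cat
begin

lemma exact_structure: "exact_structure C"
  using exact_category unfolding exact_category_def by (elim conjE)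

lemma zero_obj_exists: "\<exists>z. is_zero_obj C z"
  using exact_category unfolding exact_category_def additive_def by (elim conjE)

lemma coprod_exists: "a \<in> Ob C \<Longrightarrow> b \<in> Ob C \<Longrightarrow> \<exists>w i j. is_coprod C a b w i j"
  using exact_category unfolding exact_category_def additive_def by (elim conjE) meson

lemma conflation_Ob:
  "conflation C a b c i p \<Longrightarrow> a \<in> Ob C \<and> b \<in> Ob C \<and> c \<in> Ob C"
  unfolding conflation_def using hom_dom hom_cod by blast

lemma conflation_iso_transport:
  assumes "conflation C a b c i p" "i' \<in> Hom C a' b'" "p' \<in> Hom C b' c'"
    and "iso C u a' a" "iso C v b' b" "iso C w c' c"
    and "cmp C v i' = cmp C i u" "cmp C w p' = cmp C p v"
  shows "conflation C a' b' c' i' p'"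
proof -
  have "Conf C i' p'"
    using exact_structure assms unfolding exact_structure_def by (elim conjE) meson
  then show ?thesis
    unfolding conflation_def using assms(2,3) by blast
qed

lemma idm_conflation:
  assumes x: "x \<in> Ob C"
  shows "\<exists>c. conflation C x x c (idm C x) (mzero C x c)"
proof -
  have "adm_mono C (idm C x)"
    using exact_structure x unfolding exact_structure_def by (elim conjE) meson
  then obtain p where "Conf C (idm C x) p"
    unfolding adm_mono_def by blast
  then obtain a b c where kc: "kc_pair C a b c (idm C x) p"
    using exact_structure unfolding exact_structure_def by (elim conjE) meson
  have "idm C x \<in> Hom C a b" and p: "p \<in> Hom C b c" "cmp C p (idm C x) = mzero C a c"
    using kc unfolding kc_pair_def is_kernel_def is_cokernel_def by blast+
  then have "a = x" "b = x"
    using hom_unique idm_hom x by blast+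
  then have "p = mzero C x c"
    using p cmp_idm_right by metis
  then show ?thesis
    using \<open>Conf C (idm C x) p\<close> \<open>a = x\<close> \<open>b = x\<close> p(1) idm_hom x unfolding conflation_def by blast
qed

lemma thick_iso_closed:
  assumes D: "thick C D" and f: "iso C f x y" and y: "y \<in> D"
  shows "x \<in> D"
proof -
  have Ob: "x \<in> Ob C" "y \<in> Ob C"
    using iso_hom[OF f] hom_dom hom_cod by blast+
  obtain c where cf: "conflation C y y c (idm C y) (mzero C y c)"
    using idm_conflation[OF Ob(2)] by blast
  have c: "c \<in> Ob C"
    using conflation_Ob[OF cf] by blast
  have "conflation C x y c f (mzero C y c)"
  proof (rule conflation_iso_transport[OF cf iso_hom[OF f] _ f iso_idm[OF Ob(2)] iso_idm[OF c]])
    show "mzero C y c \<in> Hom C y c"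
      using mzero_hom Ob c by blast
    show "cmp C (idm C y) f = cmp C (idm C y) f" ..
    show "cmp C (idm C c) (mzero C y c) = cmp C (mzero C y c) (idm C y)"
      using cmp_idm_left cmp_idm_right mzero_hom Ob c by metis
  qed
  then show ?thesis
    using D y cf unfolding thick_def by blast
qed

lemma thick_iso_iff: "thick C D \<Longrightarrow> iso C f x y \<Longrightarrow> x \<in> D \<longleftrightarrow> y \<in> D"
  using thick_iso_closed iso_inverse by metis

(* The pullback of two zero maps is a product, so the kernel of one projection is
   identified with the other factor. *)
lemma pullback_of_zeros_kernel_iso:
  assumes pb: "is_pullback C x1 c B x2 (mzero C x1 c) (mzero C x2 c) p' f'"
    and ker: "is_kernel C p' B x2 i' a"
  shows "iso C (cmp C f' i') a x1"
proof -
  have p': "p' \<in> Hom C B x2" and f': "f' \<in> Hom C B x1" and i': "i' \<in> Hom C a B"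
    and p'i': "cmp C p' i' = mzero C a x2"
    using pb ker unfolding is_pullback_def is_kernel_def by blast+
  have Ob: "x1 \<in> Ob C" "x2 \<in> Ob C" "c \<in> Ob C" "a \<in> Ob C"
    using pb i' hom_dom unfolding is_pullback_def by (blast dest: hom_cod)+
  have pb_unique: "\<exists>!u. u \<in> Hom C w B \<and> cmp C f' u = g \<and> cmp C p' u = mzero C w x2"
    if g: "g \<in> Hom C w x1" for w g
  proof -
    have w: "w \<in> Ob C"
      using hom_dom[OF g] .
    have "cmp C (mzero C x1 c) g = cmp C (mzero C x2 c) (mzero C w x2)"
      using cmp_mzero_left[OF g Ob(3)] cmp_mzero_left[OF mzero_hom[OF w Ob(2)] Ob(3)] by simp
    then show ?thesis
      using pb g Ob hom_dom[OF g] mzero_hom unfolding is_pullback_def by blast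
  qed
  obtain u where u: "u \<in> Hom C x1 B" "cmp C f' u = idm C x1" "cmp C p' u = mzero C x1 x2"
    using pb_unique[OF idm_hom[OF Ob(1)]] by blast
  obtain v where v: "v \<in> Hom C x1 a" "cmp C i' v = u"
    using ker u Ob(1) unfolding is_kernel_def by blast
  have fi': "cmp C f' i' \<in> Hom C a x1"
    using cmp_hom[OF i' f'] .
  have left_inverse: "cmp C (cmp C f' i') v = idm C x1"
    using cmp_assoc[OF v(1) i' f'] v(2) u(2) by simp
  have "cmp C u (cmp C f' i') \<in> Hom C a B \<and> cmp C f' (cmp C u (cmp C f' i')) = cmp C f' i'
      \<and> cmp C p' (cmp C u (cmp C f' i')) = mzero C a x2"
    using cmp_hom[OF fi' u(1)] cmp_assoc[OF fi' u(1) f'] cmp_assoc[OF fi' u(1) p'] u(2,3)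
      cmp_idm_left[OF fi'] cmp_mzero_left[OF fi' Ob(2)] by simp
  then have "cmp C u (cmp C f' i') = i'"
    using pb_unique[OF fi'] i' p'i' by blast
  then have "cmp C i' (cmp C v (cmp C f' i')) = cmp C i' (idm C a)"
    using cmp_assoc[OF fi' v(1) i'] v(2) cmp_idm_right[OF i'] by simp
  moreover have "\<exists>!w. w \<in> Hom C a a \<and> cmp C i' w = i'"
    using ker p'i' i' Ob(4) unfolding is_kernel_def by blast
  ultimately have "cmp C v (cmp C f' i') = idm C a"
    using cmp_hom[OF fi' v(1)] idm_hom[OF Ob(4)] cmp_idm_right[OF i'] by auto
  then show ?thesis
    unfolding iso_def using fi' v(1) left_inverse by blast
qed

(* The cokernel of the identity of x1 is an admissible epi, necessarily zero; its pullback
   along the zero map from x2 is an admissible epi onto x2 with kernel isomorphic to x1. *)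
lemma extension_conflation_exists:
  assumes x1: "x1 \<in> Ob C" and x2: "x2 \<in> Ob C"
  shows "\<exists>a B i p f. conflation C a B x2 i p \<and> iso C f a x1"
proof -
  obtain c where cf: "conflation C x1 x1 c (idm C x1) (mzero C x1 c)"
    using idm_conflation[OF x1] by blast
  have c: "c \<in> Ob C"
    using conflation_Ob[OF cf] by blast
  have "adm_epi C (mzero C x1 c)"
    using cf unfolding conflation_def adm_epi_def by blast
  then obtain B p' f' where pb: "is_pullback C x1 c B x2 (mzero C x1 c) (mzero C x2 c) p' f'"
    and "adm_epi C p'"
    using exact_structure mzero_hom x1 x2 c unfolding exact_structure_def by (elim conjE) meson
  then obtain i' where "Conf C i' p'"
    unfolding adm_epi_def by blast
  then obtain a B' x2' where kc: "kc_pair C a B' x2' i' p'"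
    using exact_structure unfolding exact_structure_def by (elim conjE) meson
  have "p' \<in> Hom C B x2"
    using pb unfolding is_pullback_def by blast
  moreover have "i' \<in> Hom C a B'" "p' \<in> Hom C B' x2'"
    using kc unfolding kc_pair_def is_kernel_def by blast+
  ultimately have "B' = B" "x2' = x2"
    using hom_unique by blast+
  then have "conflation C a B x2 i' p'" "is_kernel C p' B x2 i' a"
    using \<open>Conf C i' p'\<close> kc \<open>i' \<in> Hom C a B'\<close> \<open>p' \<in> Hom C B x2\<close>
    unfolding conflation_def kc_pair_def by blast+
  then show ?thesis
    using pullback_of_zeros_kernel_iso[OF pb] by blast
qed

lemma thick_pair_object:
  assumes "x1 \<in> Ob C" "x2 \<in> Ob C"
  shows "\<exists>w\<in>Ob C. \<forall>D. thick C D \<longrightarrow> (w \<in> D \<longleftrightarrow> x1 \<in> D \<and> x2 \<in> D)"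
proof -
  obtain a B i p f where cf: "conflation C a B x2 i p" and f: "iso C f a x1"
    using extension_conflation_exists[OF assms] by blast
  have "B \<in> D \<longleftrightarrow> x1 \<in> D \<and> x2 \<in> D" if "thick C D" for D
    using that cf thick_iso_iff[OF that f] unfolding thick_def by blast
  then show ?thesis
    using conflation_Ob[OF cf] by blast
qed

definition thick_additive :: "'o set \<Rightarrow> bool" where
  "thick_additive D \<longleftrightarrow> thick C D \<and> additive_subcat C D"

lemma thick_additive_zero_obj: "thick_additive D \<Longrightarrow> is_zero_obj C z \<Longrightarrow> z \<in> D"
  unfolding thick_additive_def additive_subcat_def
  using thick_iso_iff zero_obj_iso by metis

lemma thick_additive_coprod:
  "thick_additive D \<Longrightarrow> a \<in> D \<Longrightarrow> b \<in> D \<Longrightarrow> is_coprod C a b w i j \<Longrightarrow> w \<in> D"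
  unfolding thick_additive_def additive_subcat_def by blast

lemma thick_additiveI:
  assumes "D \<subseteq> Ob C"
    and "\<And>a b c i p. conflation C a b c i p \<Longrightarrow> b \<in> D \<longleftrightarrow> a \<in> D \<and> c \<in> D"
    and "\<And>z. is_zero_obj C z \<Longrightarrow> z \<in> D"
    and "\<And>a b w i j. a \<in> D \<Longrightarrow> b \<in> D \<Longrightarrow> is_coprod C a b w i j \<Longrightarrow> w \<in> D"
  shows "thick_additive D"
  unfolding thick_additive_def thick_def additive_subcat_def
  using assms zero_obj_exists by blast

lemma thick_additive_Ob: "thick_additive (Ob C)"
  by (rule thick_additiveI) (use conflation_Ob zero_obj_Ob coprod_Ob in blast)+

lemma thick_additive_Inter:
  assumes "\<And>k. k \<in> K \<Longrightarrow> thick_additive (D k)"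
  shows "thick_additive {u \<in> Ob C. \<forall>k\<in>K. u \<in> D k}"
proof (rule thick_additiveI)
  fix a b c i p
  assume cf: "conflation C a b c i p"
  then have "b \<in> D k \<longleftrightarrow> a \<in> D k \<and> c \<in> D k" if "k \<in> K" for k
    using assms[OF that] unfolding thick_additive_def thick_def by blast
  then show "b \<in> {u \<in> Ob C. \<forall>k\<in>K. u \<in> D k} \<longleftrightarrow>
      a \<in> {u \<in> Ob C. \<forall>k\<in>K. u \<in> D k} \<and> c \<in> {u \<in> Ob C. \<forall>k\<in>K. u \<in> D k}"
    using conflation_Ob[OF cf] by blast
next
  fix z
  assume "is_zero_obj C z"
  then show "z \<in> {u \<in> Ob C. \<forall>k\<in>K. u \<in> D k}"
    using assms thick_additive_zero_obj zero_obj_Ob by blast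
next
  fix a b w i j
  assume "a \<in> {u \<in> Ob C. \<forall>k\<in>K. u \<in> D k}" "b \<in> {u \<in> Ob C. \<forall>k\<in>K. u \<in> D k}"
    and cp: "is_coprod C a b w i j"
  then show "w \<in> {u \<in> Ob C. \<forall>k\<in>K. u \<in> D k}"
    using assms thick_additive_coprod coprod_Ob[OF cp] by blast
qed blast

lemma thick_additive_vimage:
  assumes "exact_endofunctor C F Fm" and D: "thick_additive D"
  shows "thick_additive {u \<in> Ob C. F u \<in> D}"
proof -
  interpret exact_endofunctor C F Fm
    by (rule assms(1))
  show ?thesis
  proof (rule thick_additiveI)
    fix a b c i p
    assume cf: "conflation C a b c i p"
    then show "b \<in> {u \<in> Ob C. F u \<in> D} \<longleftrightarrow> a \<in> {u \<in> Ob C. F u \<in> D} \<and> c \<in> {u \<in> Ob C. F u \<in> D}"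
      using D map_conflation[OF cf] conflation_Ob[OF cf] unfolding thick_additive_def thick_def
      by blast
  next
    fix z
    assume "is_zero_obj C z"
    then show "z \<in> {u \<in> Ob C. F u \<in> D}"
      using map_zero_obj zero_obj_Ob thick_additive_zero_obj[OF D] by blast
  next
    fix a b w i j
    assume "a \<in> {u \<in> Ob C. F u \<in> D}" "b \<in> {u \<in> Ob C. F u \<in> D}" and cp: "is_coprod C a b w i j"
    then show "w \<in> {u \<in> Ob C. F u \<in> D}"
      using map_coprod[OF cp] thick_additive_coprod[OF D] coprod_Ob[OF cp] by blast
  qed blast
qed

end

section \<open>Exact tensor categories and thick tensor ideals\<close>

locale exact_tensor_cat = exact_cat C for C :: "('o, 'm, 'z) tcat_scheme" +
  assumes tensor_structure: "tensor_structure C"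
begin

lemma tob_Ob: "x \<in> Ob C \<Longrightarrow> y \<in> Ob C \<Longrightarrow> tob C x y \<in> Ob C"
  using tensor_structure unfolding tensor_structure_def by (elim conjE) meson

lemma tmo_hom: "f \<in> Hom C x x' \<Longrightarrow> g \<in> Hom C y y' \<Longrightarrow> tmo C f g \<in> Hom C (tob C x y) (tob C x' y')"
  using tensor_structure unfolding tensor_structure_def by (elim conjE) meson

lemma tmo_idm: "x \<in> Ob C \<Longrightarrow> y \<in> Ob C \<Longrightarrow> tmo C (idm C x) (idm C y) = idm C (tob C x y)"
  using tensor_structure unfolding tensor_structure_def by (elim conjE) meson

lemma tmo_cmp:
  "f \<in> Hom C x x' \<Longrightarrow> f' \<in> Hom C x' x'' \<Longrightarrow> g \<in> Hom C y y' \<Longrightarrow> g' \<in> Hom C y' y'' \<Longrightarrow>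
    tmo C (cmp C f' f) (cmp C g' g) = cmp C (tmo C f' g') (tmo C f g)"
  using tensor_structure unfolding tensor_structure_def by (elim conjE) meson

lemma tmo_madd_left:
  "f1 \<in> Hom C x x' \<Longrightarrow> f2 \<in> Hom C x x' \<Longrightarrow> g \<in> Hom C y y' \<Longrightarrow>
    tmo C (madd C f1 f2) g = madd C (tmo C f1 g) (tmo C f2 g)"
  using tensor_structure unfolding tensor_structure_def by (elim conjE) meson

lemma tmo_madd_right:
  "f \<in> Hom C x x' \<Longrightarrow> g1 \<in> Hom C y y' \<Longrightarrow> g2 \<in> Hom C y y' \<Longrightarrow>
    tmo C f (madd C g1 g2) = madd C (tmo C f g1) (tmo C f g2)"
  using tensor_structure unfolding tensor_structure_def by (elim conjE) meson

lemma asc_iso: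
  "x \<in> Ob C \<Longrightarrow> y \<in> Ob C \<Longrightarrow> z \<in> Ob C \<Longrightarrow>
    iso C (asc C x y z) (tob C (tob C x y) z) (tob C x (tob C y z))"
  using tensor_structure unfolding tensor_structure_def by (elim conjE) meson

lemma tunit_Ob: "tunit C \<in> Ob C"
  using tensor_structure unfolding tensor_structure_def by (elim conjE)

lemma runit_iso: "x \<in> Ob C \<Longrightarrow> iso C (runit C x) (tob C x (tunit C)) x"
  and lunit_iso: "x \<in> Ob C \<Longrightarrow> iso C (lunit C x) (tob C (tunit C) x) x"
  using tensor_structure unfolding tensor_structure_def by (elim conjE; meson)+

lemma tmo_conflation:
  assumes "conflation C a b c i p" "y \<in> Ob C"
  shows "Conf C (tmo C i (idm C y)) (tmo C p (idm C y))"
    and "Conf C (tmo C (idm C y) i) (tmo C (idm C y) p)"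
  using tensor_structure assms unfolding tensor_structure_def by (elim conjE; meson)+

lemma exact_endofunctor_tensor_right:
  assumes z: "z \<in> Ob C"
  shows "exact_endofunctor C (\<lambda>x. tob C x z) (\<lambda>f. tmo C f (idm C z))"
proof unfold_locales
  have iz: "idm C z \<in> Hom C z z"
    using idm_hom[OF z] .
  show "tmo C f (idm C z) \<in> Hom C (tob C x z) (tob C y z)" if "f \<in> Hom C x y" for f x y
    using tmo_hom[OF that iz] .
  show "tmo C (idm C x) (idm C z) = idm C (tob C x z)" if "x \<in> Ob C" for x
    using tmo_idm[OF that z] .
  show "tmo C (cmp C g f) (idm C z) = cmp C (tmo C g (idm C z)) (tmo C f (idm C z))"
    if "f \<in> Hom C x y" "g \<in> Hom C y w" for f g x y w
    using tmo_cmp[OF that iz iz] cmp_idm_left[OF iz] by simp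
  show "tmo C (madd C f g) (idm C z) = madd C (tmo C f (idm C z)) (tmo C g (idm C z))"
    if "f \<in> Hom C x y" "g \<in> Hom C x y" for f g x y
    using tmo_madd_left[OF that iz] .
  show "conflation C (tob C a z) (tob C b z) (tob C c z) (tmo C i (idm C z)) (tmo C p (idm C z))"
    if "conflation C a b c i p" for a b c i p
    using tmo_conflation(1)[OF that z] tmo_hom iz that unfolding conflation_def by blast
qed

lemma exact_endofunctor_tensor_left:
  assumes z: "z \<in> Ob C"
  shows "exact_endofunctor C (\<lambda>x. tob C z x) (\<lambda>f. tmo C (idm C z) f)"
proof unfold_locales
  have iz: "idm C z \<in> Hom C z z"
    using idm_hom[OF z] .
  show "tmo C (idm C z) f \<in> Hom C (tob C z x) (tob C z y)" if "f \<in> Hom C x y" for f x y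
    using tmo_hom[OF iz that] .
  show "tmo C (idm C z) (idm C x) = idm C (tob C z x)" if "x \<in> Ob C" for x
    using tmo_idm[OF z that] .
  show "tmo C (idm C z) (cmp C g f) = cmp C (tmo C (idm C z) g) (tmo C (idm C z) f)"
    if "f \<in> Hom C x y" "g \<in> Hom C y w" for f g x y w
    using tmo_cmp[OF iz iz that] cmp_idm_left[OF iz] by simp
  show "tmo C (idm C z) (madd C f g) = madd C (tmo C (idm C z) f) (tmo C (idm C z) g)"
    if "f \<in> Hom C x y" "g \<in> Hom C x y" for f g x y
    using tmo_madd_right[OF iz that] .
  show "conflation C (tob C z a) (tob C z b) (tob C z c) (tmo C (idm C z) i) (tmo C (idm C z) p)"
    if "conflation C a b c i p" for a b c i p
    using tmo_conflation(2)[OF that z] tmo_hom iz that unfolding conflation_def by blast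
qed

lemma tmo_iso_idm:
  "iso C f x x' \<Longrightarrow> y \<in> Ob C \<Longrightarrow> iso C (tmo C f (idm C y)) (tob C x y) (tob C x' y)"
  using additive_endofunctor.map_iso exact_endofunctor.axioms(1) exact_endofunctor_tensor_right
  by fast

lemma thick_tensor_ideal_iff:
  "thick_tensor_ideal C D \<longleftrightarrow>
    thick_additive D \<and> (\<forall>x\<in>Ob C. \<forall>y\<in>Ob C. x \<in> D \<or> y \<in> D \<longrightarrow> tob C x y \<in> D)"
  unfolding thick_tensor_ideal_def tensor_ideal_def thick_additive_def by blast

lemma thick_tensor_ideal_thick_additive: "thick_tensor_ideal C D \<Longrightarrow> thick_additive D"
  unfolding thick_tensor_ideal_iff by blast

lemma thick_tensor_ideal_iso_iff:
  "thick_tensor_ideal C D \<Longrightarrow> iso C f x y \<Longrightarrow> x \<in> D \<longleftrightarrow> y \<in> D"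
  using thick_tensor_ideal_thick thick_iso_iff by blast

lemma thick_tensor_ideal_zero_obj: "thick_tensor_ideal C D \<Longrightarrow> is_zero_obj C z \<Longrightarrow> z \<in> D"
  using thick_tensor_ideal_thick_additive thick_additive_zero_obj by blast

lemma thick_tensor_ideal_Ob: "thick_tensor_ideal C (Ob C)"
  unfolding thick_tensor_ideal_iff using thick_additive_Ob tob_Ob by blast

lemma thick_tensor_ideal_Inter:
  assumes "\<F> \<noteq> {}" and "\<And>D. D \<in> \<F> \<Longrightarrow> thick_tensor_ideal C D"
  shows "thick_tensor_ideal C (\<Inter>\<F>)"
proof -
  obtain D0 where "D0 \<in> \<F>"
    using assms(1) by blast
  then have "\<Inter>\<F> \<subseteq> Ob C"
    using assms(2) thick_tensor_ideal_subset by blast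
  then have "\<Inter>\<F> = {u \<in> Ob C. \<forall>D\<in>\<F>. u \<in> D}"
    by blast
  then have "thick_additive (\<Inter>\<F>)"
    using thick_additive_Inter[of \<F> "\<lambda>D. D"] thick_tensor_ideal_thick_additive[OF assms(2)]
    by simp
  then show ?thesis
    unfolding thick_tensor_ideal_iff
  proof (intro conjI ballI impI)
    fix x y
    assume xy: "x \<in> Ob C" "y \<in> Ob C" "x \<in> \<Inter>\<F> \<or> y \<in> \<Inter>\<F>"
    show "tob C x y \<in> \<Inter>\<F>"
    proof
      fix D
      assume D: "D \<in> \<F>"
      show "tob C x y \<in> D"
        using xy D thick_tensor_ideal_tob_left[OF assms(2)[OF D]]
          thick_tensor_ideal_tob_right[OF assms(2)[OF D]] by blast
    qed
  qed
qed

lemma thick_tensor_ideal_gen: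
  assumes "S \<subseteq> Ob C"
  shows "thick_tensor_ideal C (gen C S)"
  unfolding gen_def
proof (rule thick_tensor_ideal_Inter)
  show "{D. thick_tensor_ideal C D \<and> S \<subseteq> D} \<noteq> {}"
    using thick_tensor_ideal_Ob assms by blast
qed simp

lemma gen_subset_Ob: "S \<subseteq> Ob C \<Longrightarrow> gen C S \<subseteq> Ob C"
  using thick_tensor_ideal_subset[OF thick_tensor_ideal_gen] .

lemma thick_tensor_ideal_directed_Union:
  assumes "\<F> \<noteq> {}" and ideals: "\<And>D. D \<in> \<F> \<Longrightarrow> thick_tensor_ideal C D"
    and directed: "\<And>D1 D2. D1 \<in> \<F> \<Longrightarrow> D2 \<in> \<F> \<Longrightarrow> \<exists>D\<in>\<F>. D1 \<union> D2 \<subseteq> D"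
  shows "thick_tensor_ideal C (\<Union>\<F>)"
proof -
  have common: "\<exists>D\<in>\<F>. a \<in> D \<and> b \<in> D" if ab: "a \<in> \<Union>\<F>" "b \<in> \<Union>\<F>" for a b
  proof -
    obtain D1 D2 where D12: "D1 \<in> \<F>" "D2 \<in> \<F>" "a \<in> D1" "b \<in> D2"
      using ab by blast
    obtain D where "D \<in> \<F>" "D1 \<union> D2 \<subseteq> D"
      using directed[OF D12(1,2)] by blast
    then show ?thesis
      using D12(3,4) by blast
  qed
  show ?thesis
    unfolding thick_tensor_ideal_iff
  proof (intro conjI thick_additiveI ballI impI)
    show "\<Union>\<F> \<subseteq> Ob C"
    proof
      fix u
      assume "u \<in> \<Union>\<F>"
      then obtain D where "D \<in> \<F>" "u \<in> D"
        by blast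
      then show "u \<in> Ob C"
        using thick_tensor_ideal_subset[OF ideals] by blast
    qed
  next
    fix a b c i p
    assume cf: "conflation C a b c i p"
    have thick: "b \<in> D \<longleftrightarrow> a \<in> D \<and> c \<in> D" if "D \<in> \<F>" for D
      using thick_tensor_ideal_thick[OF ideals[OF that]] cf unfolding thick_def by blast
    show "b \<in> \<Union>\<F> \<longleftrightarrow> a \<in> \<Union>\<F> \<and> c \<in> \<Union>\<F>"
    proof
      assume "b \<in> \<Union>\<F>"
      then show "a \<in> \<Union>\<F> \<and> c \<in> \<Union>\<F>"
        using thick by blast
    next
      assume "a \<in> \<Union>\<F> \<and> c \<in> \<Union>\<F>"
      then obtain D where "D \<in> \<F>" "a \<in> D" "c \<in> D"
        using common by blast
      then show "b \<in> \<Union>\<F>"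
        using thick by blast
    qed
  next
    fix z
    assume z: "is_zero_obj C z"
    obtain D where "D \<in> \<F>"
      using assms(1) by blast
    then show "z \<in> \<Union>\<F>"
      using thick_tensor_ideal_zero_obj[OF ideals z] by blast
  next
    fix a b w i j
    assume "a \<in> \<Union>\<F>" "b \<in> \<Union>\<F>" and cp: "is_coprod C a b w i j"
    then obtain D where "D \<in> \<F>" "a \<in> D" "b \<in> D"
      using common by blast
    then show "w \<in> \<Union>\<F>"
      using thick_additive_coprod[OF thick_tensor_ideal_thick_additive[OF ideals] _ _ cp] by blast
  next
    fix x y
    assume x: "x \<in> Ob C" and y: "y \<in> Ob C" and "x \<in> \<Union>\<F> \<or> y \<in> \<Union>\<F>"
    then obtain D where D: "D \<in> \<F>" "x \<in> D \<or> y \<in> D"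
      by blast
    then have "tob C x y \<in> D"
      using thick_tensor_ideal_tob_left[OF ideals[OF D(1)] x]
        thick_tensor_ideal_tob_right[OF ideals[OF D(1)] _ y]
      by blast
    then show "tob C x y \<in> \<Union>\<F>"
      using D(1) by blast
  qed
qed

lemma thick_tensor_ideal_gen_Union:
  assumes "A \<subseteq> Lthick C"
  shows "thick_tensor_ideal C (gen C (\<Union>A))"
proof (rule thick_tensor_ideal_gen)
  show "\<Union>A \<subseteq> Ob C"
  proof (rule Union_least)
    fix a
    assume "a \<in> A"
    then show "a \<subseteq> Ob C"
      using assms thick_tensor_ideal_subset unfolding Lthick_def by blast
  qed
qed

lemma Lthick_is_sup:
  assumes "A \<subseteq> Lthick C"
  shows "is_sup (Lthick C) (\<subseteq>) A (gen C (\<Union>A))"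
proof -
  have "gen C (\<Union>A) \<in> Lthick C"
    unfolding Lthick_def using thick_tensor_ideal_gen_Union[OF assms] by simp
  moreover have "\<forall>a\<in>A. a \<subseteq> gen C (\<Union>A)"
  proof
    fix a
    assume "a \<in> A"
    then have "a \<subseteq> \<Union>A"
      by (rule Union_upper)
    also have "\<Union>A \<subseteq> gen C (\<Union>A)"
      by (rule gen_subset)
    finally show "a \<subseteq> gen C (\<Union>A)" .
  qed
  moreover have "\<forall>b\<in>Lthick C. (\<forall>a\<in>A. a \<subseteq> b) \<longrightarrow> gen C (\<Union>A) \<subseteq> b"
    unfolding Lthick_def by (simp add: gen_minimal Union_least)
  ultimately show ?thesis
    unfolding is_sup_def by (intro conjI)
qed

lemma Lthick_lsup:
  assumes "A \<subseteq> Lthick C"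
  shows "lsup (Lthick C) (\<subseteq>) A = gen C (\<Union>A)"
  unfolding lsup_def
proof (rule the_equality)
  show "is_sup (Lthick C) (\<subseteq>) A (gen C (\<Union>A))"
    by (rule Lthick_is_sup[OF assms])
  show "s = gen C (\<Union>A)" if "is_sup (Lthick C) (\<subseteq>) A s" for s
    by (rule is_sup_subset_unique[OF that Lthick_is_sup[OF assms]])
qed

section \<open>Products of thick tensor ideals\<close>

lemma fincop_subset_Ob: "fincop C S \<subseteq> Ob C"
proof
  fix x
  assume "x \<in> fincop C S"
  then show "x \<in> Ob C"
    by induction (use zero_obj_Ob coprod_Ob in blast)+
qed

lemma fincop_minimal:
  assumes E: "thick_additive E" and S: "S \<subseteq> E"
  shows "fincop C S \<subseteq> E"
proof
  fix x
  assume "x \<in> fincop C S"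
  then show "x \<in> E"
  proof induction
    case (zero z)
    then show ?case
      by (rule thick_additive_zero_obj[OF E])
  next
    case (step a b z i j)
    then show ?case
      using thick_additive_coprod[OF E] S by blast
  qed
qed

lemma iso_fincop:
  assumes "s \<in> S" "s \<in> Ob C"
  shows "\<exists>w\<in>fincop C S. \<exists>f. iso C f s w"
proof -
  obtain z where z: "is_zero_obj C z"
    using zero_obj_exists by blast
  then obtain w i j where cp: "is_coprod C z s w i j"
    using coprod_exists zero_obj_Ob assms(2) by blast
  have "w \<in> fincop C S"
    by (rule fincop.step[OF fincop.zero[OF z] assms(1) cp])
  then show ?thesis
    using coprod_zero_left_iso[OF z cp] by blast
qed

lemma thick_tensor_ideal_tprod: "thick_tensor_ideal C (tprod C D1 D2)"
  unfolding tprod_def tprod_class_def by (rule thick_tensor_ideal_gen[OF fincop_subset_Ob])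

lemma tprod_subset_Ob: "tprod C D1 D2 \<subseteq> Ob C"
  by (rule thick_tensor_ideal_subset[OF thick_tensor_ideal_tprod])

lemma tprod_subset_iff:
  assumes E: "thick_tensor_ideal C E" and D: "D1 \<subseteq> Ob C" "D2 \<subseteq> Ob C"
  shows "tprod C D1 D2 \<subseteq> E \<longleftrightarrow> (\<forall>x\<in>D1. \<forall>y\<in>D2. tob C x y \<in> E)"
proof -
  let ?S = "{tob C x y | x y. x \<in> D1 \<and> y \<in> D2}"
  have "tprod C D1 D2 \<subseteq> E \<longleftrightarrow> fincop C ?S \<subseteq> E"
    unfolding tprod_def tprod_class_def by (rule gen_subset_iff[OF E])
  also have "\<dots> \<longleftrightarrow> ?S \<subseteq> E"
  proof
    assume fincop: "fincop C ?S \<subseteq> E"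
    show "?S \<subseteq> E"
    proof
      fix s
      assume s: "s \<in> ?S"
      then have "s \<in> Ob C"
        using tob_Ob D by blast
      then obtain w f where "w \<in> fincop C ?S" "iso C f s w"
        using iso_fincop[OF s] by blast
      then show "s \<in> E"
        using fincop thick_tensor_ideal_iso_iff[OF E] by blast
    qed
  next
    assume "?S \<subseteq> E"
    then show "fincop C ?S \<subseteq> E"
      by (rule fincop_minimal[OF thick_tensor_ideal_thick_additive[OF E]])
  qed
  also have "\<dots> \<longleftrightarrow> (\<forall>x\<in>D1. \<forall>y\<in>D2. tob C x y \<in> E)"
    by blast
  finally show ?thesis .
qed

definition right_residual :: "'o set \<Rightarrow> 'o set \<Rightarrow> 'o set" where
  "right_residual c E = {u \<in> Ob C. \<forall>z\<in>c. tob C u z \<in> E}"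

definition left_residual :: "'o set \<Rightarrow> 'o set \<Rightarrow> 'o set" where
  "left_residual a E = {v \<in> Ob C. \<forall>x\<in>a. tob C x v \<in> E}"

lemma thick_tensor_ideal_right_residual:
  assumes E: "thick_tensor_ideal C E" and c: "thick_tensor_ideal C c"
  shows "thick_tensor_ideal C (right_residual c E)"
  unfolding thick_tensor_ideal_iff
proof (intro conjI ballI impI)
  have "thick_additive {u \<in> Ob C. tob C u z \<in> E}" if "z \<in> c" for z
    using thick_additive_vimage[OF exact_endofunctor_tensor_right
        thick_tensor_ideal_thick_additive[OF E]]
      thick_tensor_ideal_subset[OF c] that by blast
  then have "thick_additive {u \<in> Ob C. \<forall>z\<in>c. u \<in> {u \<in> Ob C. tob C u z \<in> E}}"
    by (rule thick_additive_Inter)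
  then show "thick_additive (right_residual c E)"
    unfolding right_residual_def by (simp cong: conj_cong)
next
  fix x y
  assume x: "x \<in> Ob C" and y: "y \<in> Ob C" and xy: "x \<in> right_residual c E \<or> y \<in> right_residual c E"
  have "tob C (tob C x y) z \<in> E" if z: "z \<in> c" for z
  proof -
    have "z \<in> Ob C"
      using z thick_tensor_ideal_subset[OF c] by blast
    then have iso: "iso C (asc C x y z) (tob C (tob C x y) z) (tob C x (tob C y z))"
      using asc_iso x y by blast
    have "tob C x (tob C y z) \<in> E"
      using xy
    proof
      assume "x \<in> right_residual c E"
      then show ?thesis
        using thick_tensor_ideal_tob_left[OF c y z] unfolding right_residual_def by blast
    next
      assume "y \<in> right_residual c E"
      then show ?thesis
        using thick_tensor_ideal_tob_left[OF E x] z unfolding right_residual_def by blast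
    qed
    then show ?thesis
      using thick_tensor_ideal_iso_iff[OF E iso] by blast
  qed
  then show "tob C x y \<in> right_residual c E"
    unfolding right_residual_def using tob_Ob[OF x y] by blast
qed

lemma thick_tensor_ideal_left_residual:
  assumes E: "thick_tensor_ideal C E" and a: "thick_tensor_ideal C a"
  shows "thick_tensor_ideal C (left_residual a E)"
  unfolding thick_tensor_ideal_iff
proof (intro conjI ballI impI)
  have "thick_additive {u \<in> Ob C. tob C z u \<in> E}" if "z \<in> a" for z
    using thick_additive_vimage[OF exact_endofunctor_tensor_left
        thick_tensor_ideal_thick_additive[OF E]]
      thick_tensor_ideal_subset[OF a] that by blast
  then have "thick_additive {u \<in> Ob C. \<forall>z\<in>a. u \<in> {u \<in> Ob C. tob C z u \<in> E}}"
    by (rule thick_additive_Inter)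
  then show "thick_additive (left_residual a E)"
    unfolding left_residual_def by (simp cong: conj_cong)
next
  fix v w
  assume v: "v \<in> Ob C" and w: "w \<in> Ob C" and vw: "v \<in> left_residual a E \<or> w \<in> left_residual a E"
  have "tob C x (tob C v w) \<in> E" if x: "x \<in> a" for x
  proof -
    have "x \<in> Ob C"
      using x thick_tensor_ideal_subset[OF a] by blast
    then have iso: "iso C (asc C x v w) (tob C (tob C x v) w) (tob C x (tob C v w))"
      using asc_iso v w by blast
    have "tob C (tob C x v) w \<in> E"
      using vw
    proof
      assume "v \<in> left_residual a E"
      then show ?thesis
        using thick_tensor_ideal_tob_right[OF E _ w] x unfolding left_residual_def by blast
    next
      assume "w \<in> left_residual a E"
      then show ?thesis
        using thick_tensor_ideal_tob_right[OF a x v] unfolding left_residual_def by blast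
    qed
    then show ?thesis
      using thick_tensor_ideal_iso_iff[OF E iso] by blast
  qed
  then show "tob C v w \<in> left_residual a E"
    unfolding left_residual_def using tob_Ob[OF v w] by blast
qed

lemma tprod_subset_iff_right_residual:
  "thick_tensor_ideal C E \<Longrightarrow> D \<subseteq> Ob C \<Longrightarrow> c \<subseteq> Ob C \<Longrightarrow>
    tprod C D c \<subseteq> E \<longleftrightarrow> D \<subseteq> right_residual c E"
  unfolding tprod_subset_iff right_residual_def by blast

lemma tprod_subset_iff_left_residual:
  "thick_tensor_ideal C E \<Longrightarrow> a \<subseteq> Ob C \<Longrightarrow> D \<subseteq> Ob C \<Longrightarrow>
    tprod C a D \<subseteq> E \<longleftrightarrow> D \<subseteq> left_residual a E"
  unfolding tprod_subset_iff left_residual_def by blast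

lemma tprod_assoc:
  assumes a: "thick_tensor_ideal C a" and b: "thick_tensor_ideal C b"
    and c: "thick_tensor_ideal C c"
  shows "tprod C (tprod C a b) c = tprod C a (tprod C b c)"
proof (rule thick_tensor_ideal_eqI[OF thick_tensor_ideal_tprod thick_tensor_ideal_tprod])
  fix E
  assume E: "thick_tensor_ideal C E"
  have Ob: "a \<subseteq> Ob C" "b \<subseteq> Ob C" "c \<subseteq> Ob C"
    using a b c thick_tensor_ideal_subset by blast+
  have "tprod C (tprod C a b) c \<subseteq> E \<longleftrightarrow> (\<forall>x\<in>a. \<forall>y\<in>b. tob C x y \<in> right_residual c E)"
    using tprod_subset_iff_right_residual[OF E tprod_subset_Ob Ob(3)]
      tprod_subset_iff[OF thick_tensor_ideal_right_residual[OF E c] Ob(1,2)] by simp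
  also have "\<dots> \<longleftrightarrow> (\<forall>x\<in>a. \<forall>y\<in>b. \<forall>z\<in>c. tob C (tob C x y) z \<in> E)"
    unfolding right_residual_def using Ob tob_Ob by blast
  also have "\<dots> \<longleftrightarrow> (\<forall>x\<in>a. \<forall>y\<in>b. \<forall>z\<in>c. tob C x (tob C y z) \<in> E)"
    using thick_tensor_ideal_iso_iff[OF E asc_iso] Ob by blast
  also have "\<dots> \<longleftrightarrow> (\<forall>y\<in>b. \<forall>z\<in>c. tob C y z \<in> left_residual a E)"
    unfolding left_residual_def using Ob tob_Ob by blast
  also have "\<dots> \<longleftrightarrow> tprod C a (tprod C b c) \<subseteq> E"
    using tprod_subset_iff_left_residual[OF E Ob(1) tprod_subset_Ob]
      tprod_subset_iff[OF thick_tensor_ideal_left_residual[OF E a] Ob(2,3)] by simp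
  finally show "tprod C (tprod C a b) c \<subseteq> E \<longleftrightarrow> tprod C a (tprod C b c) \<subseteq> E" .
qed

lemma tprod_gen_right:
  assumes a: "thick_tensor_ideal C a" and S: "S \<subseteq> Ob C"
  shows "tprod C a (gen C S) = tprod C a S"
proof (rule thick_tensor_ideal_eqI[OF thick_tensor_ideal_tprod thick_tensor_ideal_tprod])
  fix E
  assume E: "thick_tensor_ideal C E"
  have a_Ob: "a \<subseteq> Ob C"
    by (rule thick_tensor_ideal_subset[OF a])
  have "tprod C a (gen C S) \<subseteq> E \<longleftrightarrow> gen C S \<subseteq> left_residual a E"
    by (rule tprod_subset_iff_left_residual[OF E a_Ob gen_subset_Ob[OF S]])
  also have "\<dots> \<longleftrightarrow> S \<subseteq> left_residual a E"
    by (rule gen_subset_iff[OF thick_tensor_ideal_left_residual[OF E a]])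
  also have "\<dots> \<longleftrightarrow> tprod C a S \<subseteq> E"
    by (rule tprod_subset_iff_left_residual[OF E a_Ob S, symmetric])
  finally show "tprod C a (gen C S) \<subseteq> E \<longleftrightarrow> tprod C a S \<subseteq> E" .
qed

lemma tprod_gen_left:
  assumes c: "thick_tensor_ideal C c" and S: "S \<subseteq> Ob C"
  shows "tprod C (gen C S) c = tprod C S c"
proof (rule thick_tensor_ideal_eqI[OF thick_tensor_ideal_tprod thick_tensor_ideal_tprod])
  fix E
  assume E: "thick_tensor_ideal C E"
  have c_Ob: "c \<subseteq> Ob C"
    by (rule thick_tensor_ideal_subset[OF c])
  have "tprod C (gen C S) c \<subseteq> E \<longleftrightarrow> gen C S \<subseteq> right_residual c E"
    by (rule tprod_subset_iff_right_residual[OF E gen_subset_Ob[OF S] c_Ob])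
  also have "\<dots> \<longleftrightarrow> S \<subseteq> right_residual c E"
    by (rule gen_subset_iff[OF thick_tensor_ideal_right_residual[OF E c]])
  also have "\<dots> \<longleftrightarrow> tprod C S c \<subseteq> E"
    by (rule tprod_subset_iff_right_residual[OF E S c_Ob, symmetric])
  finally show "tprod C (gen C S) c \<subseteq> E \<longleftrightarrow> tprod C S c \<subseteq> E" .
qed

lemma tprod_Un_right:
  assumes a: "a \<subseteq> Ob C" and b: "b \<subseteq> Ob C" and c: "c \<subseteq> Ob C"
  shows "tprod C a (b \<union> c) = gen C (tprod C a b \<union> tprod C a c)"
proof (rule thick_tensor_ideal_eqI[OF thick_tensor_ideal_tprod thick_tensor_ideal_gen])
  show "tprod C a b \<union> tprod C a c \<subseteq> Ob C"
    by (rule Un_least[OF tprod_subset_Ob tprod_subset_Ob])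
  fix E
  assume E: "thick_tensor_ideal C E"
  have "tprod C a (b \<union> c) \<subseteq> E \<longleftrightarrow> tprod C a b \<subseteq> E \<and> tprod C a c \<subseteq> E"
    unfolding tprod_subset_iff[OF E a Un_least[OF b c]] tprod_subset_iff[OF E a b]
      tprod_subset_iff[OF E a c] by blast
  also have "\<dots> \<longleftrightarrow> gen C (tprod C a b \<union> tprod C a c) \<subseteq> E"
    unfolding gen_subset_iff[OF E] by (rule Un_subset_iff[symmetric])
  finally show "tprod C a (b \<union> c) \<subseteq> E \<longleftrightarrow> gen C (tprod C a b \<union> tprod C a c) \<subseteq> E" .
qed

lemma tprod_Un_left:
  assumes a: "a \<subseteq> Ob C" and b: "b \<subseteq> Ob C" and c: "c \<subseteq> Ob C"
  shows "tprod C (a \<union> b) c = gen C (tprod C a c \<union> tprod C b c)"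
proof (rule thick_tensor_ideal_eqI[OF thick_tensor_ideal_tprod thick_tensor_ideal_gen])
  show "tprod C a c \<union> tprod C b c \<subseteq> Ob C"
    by (rule Un_least[OF tprod_subset_Ob tprod_subset_Ob])
  fix E
  assume E: "thick_tensor_ideal C E"
  have "tprod C (a \<union> b) c \<subseteq> E \<longleftrightarrow> tprod C a c \<subseteq> E \<and> tprod C b c \<subseteq> E"
    unfolding tprod_subset_iff[OF E Un_least[OF a b] c] tprod_subset_iff[OF E a c]
      tprod_subset_iff[OF E b c] by blast
  also have "\<dots> \<longleftrightarrow> gen C (tprod C a c \<union> tprod C b c) \<subseteq> E"
    unfolding gen_subset_iff[OF E] by (rule Un_subset_iff[symmetric])
  finally show "tprod C (a \<union> b) c \<subseteq> E \<longleftrightarrow> gen C (tprod C a c \<union> tprod C b c) \<subseteq> E" .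
qed

lemma Lthick_lsup_pair:
  "a \<in> Lthick C \<Longrightarrow> b \<in> Lthick C \<Longrightarrow> lsup (Lthick C) (\<subseteq>) {a, b} = gen C (a \<union> b)"
  using Lthick_lsup[of "{a, b}"] by simp

lemma tprod_Lthick: "tprod C a b \<in> Lthick C"
  unfolding Lthick_def using thick_tensor_ideal_tprod by simp

lemma tprod_lsup_distrib_left:
  assumes "a \<in> Lthick C" "b \<in> Lthick C" "c \<in> Lthick C"
  shows "tprod C a (lsup (Lthick C) (\<subseteq>) {b, c}) = lsup (Lthick C) (\<subseteq>) {tprod C a b, tprod C a c}"
proof -
  have ideals: "thick_tensor_ideal C a" "thick_tensor_ideal C b" "thick_tensor_ideal C c"
    using assms unfolding Lthick_def by simp_all
  note Ob = ideals[THEN thick_tensor_ideal_subset]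
  have "tprod C a (lsup (Lthick C) (\<subseteq>) {b, c}) = tprod C a (gen C (b \<union> c))"
    using Lthick_lsup_pair assms(2,3) by simp
  also have "\<dots> = gen C (tprod C a b \<union> tprod C a c)"
    using tprod_gen_right[OF ideals(1) Un_least[OF Ob(2,3)]] tprod_Un_right[OF Ob] by simp
  also have "\<dots> = lsup (Lthick C) (\<subseteq>) {tprod C a b, tprod C a c}"
    using Lthick_lsup_pair[OF tprod_Lthick tprod_Lthick] by simp
  finally show ?thesis .
qed

lemma tprod_lsup_distrib_right:
  assumes "a \<in> Lthick C" "b \<in> Lthick C" "c \<in> Lthick C"
  shows "tprod C (lsup (Lthick C) (\<subseteq>) {a, b}) c = lsup (Lthick C) (\<subseteq>) {tprod C a c, tprod C b c}"
proof -
  have ideals: "thick_tensor_ideal C a" "thick_tensor_ideal C b" "thick_tensor_ideal C c"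
    using assms unfolding Lthick_def by simp_all
  note Ob = ideals[THEN thick_tensor_ideal_subset]
  have "tprod C (lsup (Lthick C) (\<subseteq>) {a, b}) c = tprod C (gen C (a \<union> b)) c"
    using Lthick_lsup_pair assms(1,2) by simp
  also have "\<dots> = gen C (tprod C a c \<union> tprod C b c)"
    using tprod_gen_left[OF ideals(3) Un_least[OF Ob(1,2)]] tprod_Un_left[OF Ob] by simp
  also have "\<dots> = lsup (Lthick C) (\<subseteq>) {tprod C a c, tprod C b c}"
    using Lthick_lsup_pair[OF tprod_Lthick tprod_Lthick] by simp
  finally show ?thesis .
qed

lemma tprod_Ob_left:
  assumes a: "thick_tensor_ideal C a"
  shows "tprod C (Ob C) a = a"
proof (rule thick_tensor_ideal_eqI[OF thick_tensor_ideal_tprod a])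
  fix E
  assume E: "thick_tensor_ideal C E"
  have "(\<forall>x\<in>Ob C. \<forall>y\<in>a. tob C x y \<in> E) \<longleftrightarrow> a \<subseteq> E"
  proof
    assume "\<forall>x\<in>Ob C. \<forall>y\<in>a. tob C x y \<in> E"
    then show "a \<subseteq> E"
      using tunit_Ob thick_tensor_ideal_iso_iff[OF E lunit_iso] thick_tensor_ideal_subset[OF a]
      by blast
  qed (use thick_tensor_ideal_tob_left[OF E] in blast)
  then show "tprod C (Ob C) a \<subseteq> E \<longleftrightarrow> a \<subseteq> E"
    using tprod_subset_iff[OF E order_refl thick_tensor_ideal_subset[OF a]] by simp
qed

lemma tprod_Ob_right:
  assumes a: "thick_tensor_ideal C a"
  shows "tprod C a (Ob C) = a"
proof (rule thick_tensor_ideal_eqI[OF thick_tensor_ideal_tprod a])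
  fix E
  assume E: "thick_tensor_ideal C E"
  have "(\<forall>x\<in>a. \<forall>y\<in>Ob C. tob C x y \<in> E) \<longleftrightarrow> a \<subseteq> E"
  proof
    assume "\<forall>x\<in>a. \<forall>y\<in>Ob C. tob C x y \<in> E"
    then show "a \<subseteq> E"
      using tunit_Ob thick_tensor_ideal_iso_iff[OF E runit_iso] thick_tensor_ideal_subset[OF a]
      by blast
  qed (use thick_tensor_ideal_tob_right[OF E] in blast)
  then show "tprod C a (Ob C) \<subseteq> E \<longleftrightarrow> a \<subseteq> E"
    using tprod_subset_iff[OF E thick_tensor_ideal_subset[OF a] order_refl] by simp
qed

lemma Ob_eq_gen_tunit: "Ob C = gen C {tunit C}"
proof
  have G: "thick_tensor_ideal C (gen C {tunit C})"
    using thick_tensor_ideal_gen tunit_Ob by simp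
  then show "gen C {tunit C} \<subseteq> Ob C"
    by (rule thick_tensor_ideal_subset)
  show "Ob C \<subseteq> gen C {tunit C}"
  proof
    fix x
    assume x: "x \<in> Ob C"
    have "tunit C \<in> gen C {tunit C}"
      by (rule subsetD[OF gen_subset]) simp
    then have "tob C x (tunit C) \<in> gen C {tunit C}"
      by (rule thick_tensor_ideal_tob_left[OF G x])
    then show "x \<in> gen C {tunit C}"
      using thick_tensor_ideal_iso_iff[OF G runit_iso[OF x]] by blast
  qed
qed

lemma Lthick_lsup_Lthick: "lsup (Lthick C) (\<subseteq>) (Lthick C) = Ob C"
proof -
  have "\<Union>(Lthick C) = Ob C"
    using thick_tensor_ideal_Ob thick_tensor_ideal_subset unfolding Lthick_def by blast
  then show ?thesis
    using Lthick_lsup[OF order_refl] gen_thick_tensor_ideal[OF thick_tensor_ideal_Ob] by simp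
qed

section \<open>Compact thick tensor ideals\<close>

lemma gen_Union_eq_Union_finite:
  assumes A: "A \<subseteq> Lthick C"
  shows "gen C (\<Union>A) = \<Union>{gen C (\<Union>A') | A'. A' \<subseteq> A \<and> finite A'}"
    (is "_ = \<Union>?F")
proof
  have "thick_tensor_ideal C (\<Union>?F)"
  proof (rule thick_tensor_ideal_directed_Union)
    show "?F \<noteq> {}"
      by blast
    fix D
    assume "D \<in> ?F"
    then obtain A' where "A' \<subseteq> A" "D = gen C (\<Union>A')"
      by blast
    then show "thick_tensor_ideal C D"
      using thick_tensor_ideal_gen_Union A by blast
  next
    fix D1 D2
    assume "D1 \<in> ?F" "D2 \<in> ?F"
    then obtain A1 A2 where A12: "A1 \<subseteq> A" "finite A1" "D1 = gen C (\<Union>A1)"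
      "A2 \<subseteq> A" "finite A2" "D2 = gen C (\<Union>A2)"
      by blast
    then have "gen C (\<Union>(A1 \<union> A2)) \<in> ?F"
      by blast
    moreover have "D1 \<union> D2 \<subseteq> gen C (\<Union>(A1 \<union> A2))"
      unfolding A12(3,6) by (intro Un_least gen_mono Union_mono) simp_all
    ultimately show "\<exists>D\<in>?F. D1 \<union> D2 \<subseteq> D"
      by blast
  qed
  moreover have "\<Union>A \<subseteq> \<Union>?F"
  proof
    fix u
    assume "u \<in> \<Union>A"
    then obtain a where a: "a \<in> A" "u \<in> a"
      by blast
    have "a \<subseteq> gen C (\<Union>{a})"
      using gen_subset[of "\<Union>{a}" C] by simp
    moreover have "gen C (\<Union>{a}) \<in> ?F"
      using a(1) by blast
    ultimately show "u \<in> \<Union>?F"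
      using a(2) by blast
  qed
  ultimately show "gen C (\<Union>A) \<subseteq> \<Union>?F"
    by (rule gen_minimal)
  show "\<Union>?F \<subseteq> gen C (\<Union>A)"
  proof
    fix u
    assume "u \<in> \<Union>?F"
    then obtain A' where "A' \<subseteq> A" "u \<in> gen C (\<Union>A')"
      by blast
    moreover have "gen C (\<Union>A') \<subseteq> gen C (\<Union>A)" if "A' \<subseteq> A" for A'
      using that by (intro gen_mono Union_mono)
    ultimately show "u \<in> gen C (\<Union>A)"
      by blast
  qed
qed

lemma compact_gen_singleton:
  assumes x: "x \<in> Ob C"
  shows "compact_el (Lthick C) (\<subseteq>) (gen C {x})"
  unfolding compact_el_def
proof (intro conjI allI impI)
  show "gen C {x} \<in> Lthick C"
    unfolding Lthick_def using thick_tensor_ideal_gen x by simp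
  fix A
  assume "A \<subseteq> Lthick C \<and> gen C {x} \<subseteq> lsup (Lthick C) (\<subseteq>) A"
  then have A: "A \<subseteq> Lthick C" and "gen C {x} \<subseteq> gen C (\<Union>A)"
    using Lthick_lsup by auto
  then have "x \<in> gen C (\<Union>A)"
    using subset_Union_gen_singletons[of "{x}" C] by auto
  then obtain A' where A': "A' \<subseteq> A" "finite A'" "x \<in> gen C (\<Union>A')"
    unfolding gen_Union_eq_Union_finite[OF A] by blast
  have A'_Lthick: "A' \<subseteq> Lthick C"
    using A A'(1) by blast
  then have "thick_tensor_ideal C (gen C (\<Union>A'))"
    by (rule thick_tensor_ideal_gen_Union)
  then have "gen C {x} \<subseteq> gen C (\<Union>A')"
    by (rule gen_minimal) (simp add: A'(3))
  then show "\<exists>A'. A' \<subseteq> A \<and> finite A' \<and> gen C {x} \<subseteq> lsup (Lthick C) (\<subseteq>) A'"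
    using A'(1,2) Lthick_lsup[OF A'_Lthick] by auto
qed

lemma finite_gen_eq_gen_singleton:
  assumes "finite F" "F \<subseteq> Ob C"
  shows "\<exists>w\<in>Ob C. gen C F = gen C {w}"
  using assms
proof (induction F rule: finite_induct)
  case empty
  obtain z where z: "is_zero_obj C z"
    using zero_obj_exists by blast
  have "gen C {} = gen C {z}"
    by (rule gen_eqI) (use thick_tensor_ideal_zero_obj z in blast)
  then show ?case
    using zero_obj_Ob[OF z] by blast
next
  case (insert x F)
  then obtain w where w: "w \<in> Ob C" "gen C F = gen C {w}"
    by blast
  obtain w' where w': "w' \<in> Ob C" "\<forall>D. thick C D \<longrightarrow> (w' \<in> D \<longleftrightarrow> x \<in> D \<and> w \<in> D)"
    using thick_pair_object[OF _ w(1)] insert.prems by blast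
  have "gen C (insert x F) = gen C {w'}"
  proof (rule gen_eqI)
    fix E
    assume E: "thick_tensor_ideal C E"
    have "F \<subseteq> E \<longleftrightarrow> w \<in> E"
      using gen_subset_iff[OF E, of F] gen_subset_iff[OF E, of "{w}"] w(2) by simp
    then show "insert x F \<subseteq> E \<longleftrightarrow> {w'} \<subseteq> E"
      using w'(2) thick_tensor_ideal_thick[OF E] by blast
  qed
  then show ?case
    using w'(1) by blast
qed

lemma compact_imp_gen_singleton:
  assumes compact: "compact_el (Lthick C) (\<subseteq>) D"
  shows "\<exists>w\<in>Ob C. D = gen C {w}"
proof -
  have D: "thick_tensor_ideal C D"
    using compact unfolding compact_el_def Lthick_def by blast
  let ?A = "(\<lambda>x. gen C {x}) ` D"
  have A: "?A \<subseteq> Lthick C"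
    using thick_tensor_ideal_gen thick_tensor_ideal_subset[OF D] unfolding Lthick_def by auto
  have "D \<subseteq> \<Union>?A"
    by (rule subset_Union_gen_singletons)
  also have "\<dots> \<subseteq> lsup (Lthick C) (\<subseteq>) ?A"
    unfolding Lthick_lsup[OF A] by (rule gen_subset)
  finally obtain A' where "A' \<subseteq> ?A" "finite A'" and D_A': "D \<subseteq> lsup (Lthick C) (\<subseteq>) A'"
    using compact A unfolding compact_el_def by blast
  then obtain F where F: "F \<subseteq> D" "finite F" and A': "A' = (\<lambda>x. gen C {x}) ` F"
    by (meson finite_subset_image)
  have F_Ob: "F \<subseteq> Ob C"
    using F(1) thick_tensor_ideal_subset[OF D] by blast
  have "\<Union>A' \<subseteq> gen C F"
    unfolding A'
  proof (rule UN_least)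
    fix x
    assume "x \<in> F"
    then show "gen C {x} \<subseteq> gen C F"
      by (intro gen_mono) simp
  qed
  then have "gen C (\<Union>A') \<subseteq> gen C F"
    by (rule gen_minimal[OF thick_tensor_ideal_gen[OF F_Ob]])
  then have "D \<subseteq> gen C F"
    using D_A' Lthick_lsup \<open>A' \<subseteq> ?A\<close> A by (metis order_trans)
  moreover have "gen C F \<subseteq> D"
    by (rule gen_minimal[OF D F(1)])
  ultimately show ?thesis
    using finite_gen_eq_gen_singleton[OF F(2) F_Ob] by auto
qed

lemma compact_iff_gen_singleton:
  "compact_el (Lthick C) (\<subseteq>) D \<longleftrightarrow> (\<exists>x\<in>Ob C. D = gen C {x})"
  using compact_imp_gen_singleton compact_gen_singleton by blast

lemma Lthick_compactly_generated:
  assumes "D \<in> Lthick C"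
  shows "\<exists>A. A \<subseteq> {c. compact_el (Lthick C) (\<subseteq>) c} \<and> D = lsup (Lthick C) (\<subseteq>) A"
proof -
  have D: "thick_tensor_ideal C D"
    using assms unfolding Lthick_def by simp
  let ?A = "(\<lambda>x. gen C {x}) ` D"
  have A: "?A \<subseteq> Lthick C"
    using thick_tensor_ideal_gen thick_tensor_ideal_subset[OF D] unfolding Lthick_def by auto
  have "\<Union>?A \<subseteq> D"
  proof (rule UN_least)
    fix x
    assume "x \<in> D"
    then show "gen C {x} \<subseteq> D"
      by (intro gen_minimal[OF D]) simp
  qed
  then have "\<Union>?A = D"
    using subset_Union_gen_singletons by (rule subset_antisym)
  then have "D = lsup (Lthick C) (\<subseteq>) ?A"
    using Lthick_lsup[OF A] gen_thick_tensor_ideal[OF D] by simp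
  moreover have "?A \<subseteq> {c. compact_el (Lthick C) (\<subseteq>) c}"
    using compact_gen_singleton thick_tensor_ideal_subset[OF D] by auto
  ultimately show ?thesis
    by blast
qed

(* The largest thick tensor ideal contained in {v. v * y \<in> E}. *)
lemma thick_tensor_ideal_sandwich_residual:
  assumes E: "thick_tensor_ideal C E" and y: "y \<in> Ob C"
  shows "thick_tensor_ideal C {u \<in> Ob C. \<forall>w\<in>Ob C. tob C (tob C u w) y \<in> E}"
    (is "thick_tensor_ideal C ?M")
  unfolding thick_tensor_ideal_iff
proof (intro conjI ballI impI)
  have S: "thick_additive {v \<in> Ob C. tob C v y \<in> E}"
    using thick_additive_vimage[OF exact_endofunctor_tensor_right[OF y]
        thick_tensor_ideal_thick_additive[OF E]] by simp
  have "thick_additive {u \<in> Ob C. tob C u w \<in> {v \<in> Ob C. tob C v y \<in> E}}" if "w \<in> Ob C" for w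
    using thick_additive_vimage[OF exact_endofunctor_tensor_right[OF that] S] by simp
  then have "thick_additive
      {u \<in> Ob C. \<forall>w\<in>Ob C. u \<in> {u \<in> Ob C. tob C u w \<in> {v \<in> Ob C. tob C v y \<in> E}}}"
    by (rule thick_additive_Inter)
  then show "thick_additive ?M"
    using tob_Ob by (simp cong: conj_cong)
next
  fix u v
  assume u: "u \<in> Ob C" and v: "v \<in> Ob C" and uv: "u \<in> ?M \<or> v \<in> ?M"
  have "tob C (tob C (tob C u v) w) y \<in> E" if w: "w \<in> Ob C" for w
  proof -
    have vw: "tob C v w \<in> Ob C"
      using tob_Ob[OF v w] .
    have "tob C (tob C u (tob C v w)) y \<in> E"
      using uv
    proof
      assume "u \<in> ?M"
      then show ?thesis
        using vw by blast
    next
      assume "v \<in> ?M"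
      then have "tob C u (tob C (tob C v w) y) \<in> E"
        using thick_tensor_ideal_tob_left[OF E u] w by blast
      then show ?thesis
        using thick_tensor_ideal_iso_iff[OF E asc_iso[OF u vw y]] by blast
    qed
    then show ?thesis
      using thick_tensor_ideal_iso_iff[OF E tmo_iso_idm[OF asc_iso[OF u v w] y]] by blast
  qed
  then show "tob C u v \<in> ?M"
    using tob_Ob[OF u v] by blast
qed

lemma tprod_gen_singletons_subset_iff:
  assumes E: "thick_tensor_ideal C E" and x: "x \<in> Ob C" and y: "y \<in> Ob C"
  shows "tprod C (gen C {x}) (gen C {y}) \<subseteq> E \<longleftrightarrow> (\<forall>w\<in>Ob C. tob C (tob C x w) y \<in> E)"
proof -
  have Gx: "thick_tensor_ideal C (gen C {x})"
    using thick_tensor_ideal_gen x by simp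
  have "tprod C (gen C {x}) (gen C {y}) \<subseteq> E \<longleftrightarrow> (\<forall>u\<in>gen C {x}. tob C u y \<in> E)"
    using tprod_gen_right[OF Gx] tprod_subset_iff[OF E thick_tensor_ideal_subset[OF Gx]] y by simp
  also have "\<dots> \<longleftrightarrow> (\<forall>w\<in>Ob C. tob C (tob C x w) y \<in> E)"
  proof
    assume "\<forall>u\<in>gen C {x}. tob C u y \<in> E"
    moreover have "tob C x w \<in> gen C {x}" if "w \<in> Ob C" for w
      using thick_tensor_ideal_tob_right[OF Gx _ that] subset_Union_gen_singletons[of "{x}" C]
      by simp
    ultimately show "\<forall>w\<in>Ob C. tob C (tob C x w) y \<in> E"
      by blast
  next
    assume "\<forall>w\<in>Ob C. tob C (tob C x w) y \<in> E"
    then have "gen C {x} \<subseteq> {u \<in> Ob C. \<forall>w\<in>Ob C. tob C (tob C u w) y \<in> E}"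
      using x by (intro gen_minimal[OF thick_tensor_ideal_sandwich_residual[OF E y]]) simp
    then show "\<forall>u\<in>gen C {x}. tob C u y \<in> E"
      using tunit_Ob thick_tensor_ideal_iso_iff[OF E tmo_iso_idm[OF runit_iso y]] by blast
  qed
  finally show ?thesis .
qed

lemma tprod_gen_singletons_eq_gen_singleton:
  assumes x: "x \<in> Ob C" and y: "y \<in> Ob C" and g: "g \<in> Ob C"
    and "\<And>E. thick_tensor_ideal C E \<Longrightarrow> (\<forall>w\<in>Ob C. tob C (tob C x w) y \<in> E) \<longleftrightarrow> g \<in> E"
  shows "tprod C (gen C {x}) (gen C {y}) = gen C {g}"
proof (rule thick_tensor_ideal_eqI[OF thick_tensor_ideal_tprod thick_tensor_ideal_gen])
  show "{g} \<subseteq> Ob C"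
    using g by simp
  show "tprod C (gen C {x}) (gen C {y}) \<subseteq> E \<longleftrightarrow> gen C {g} \<subseteq> E"
    if "thick_tensor_ideal C E" for E
    using tprod_gen_singletons_subset_iff[OF that x y] assms(4)[OF that] gen_subset_iff[OF that]
    by simp
qed

lemma tprod_gen_singletons_commutative:
  assumes comm: "tensor_commutative C" and x: "x \<in> Ob C" and y: "y \<in> Ob C"
  shows "tprod C (gen C {x}) (gen C {y}) = gen C {tob C x y}"
proof (rule tprod_gen_singletons_eq_gen_singleton[OF x y tob_Ob[OF x y]])
  obtain \<sigma> where \<sigma>: "\<And>x y. x \<in> Ob C \<Longrightarrow> y \<in> Ob C \<Longrightarrow> iso C (\<sigma> x y) (tob C x y) (tob C y x)"
    using comm unfolding tensor_commutative_def by blast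
  fix E
  assume E: "thick_tensor_ideal C E"
  show "(\<forall>w\<in>Ob C. tob C (tob C x w) y \<in> E) \<longleftrightarrow> tob C x y \<in> E"
  proof
    assume "\<forall>w\<in>Ob C. tob C (tob C x w) y \<in> E"
    then show "tob C x y \<in> E"
      using tunit_Ob thick_tensor_ideal_iso_iff[OF E tmo_iso_idm[OF runit_iso[OF x] y]] by blast
  next
    assume xy: "tob C x y \<in> E"
    show "\<forall>w\<in>Ob C. tob C (tob C x w) y \<in> E"
    proof
      fix w
      assume w: "w \<in> Ob C"
      have "tob C w (tob C x y) \<in> E"
        by (rule thick_tensor_ideal_tob_left[OF E w xy])
      then have "tob C (tob C w x) y \<in> E"
        using thick_tensor_ideal_iso_iff[OF E asc_iso[OF w x y]] by blast
      then show "tob C (tob C x w) y \<in> E"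
        using thick_tensor_ideal_iso_iff[OF E tmo_iso_idm[OF \<sigma>[OF x w] y]] by blast
    qed
  qed
qed

lemma tprod_gen_singletons_generator:
  assumes c: "c \<in> Ob C" and generates: "\<forall>D. thick C D \<and> c \<in> D \<longrightarrow> D = Ob C"
    and x: "x \<in> Ob C" and y: "y \<in> Ob C"
  shows "tprod C (gen C {x}) (gen C {y}) = gen C {tob C (tob C x c) y}"
proof (rule tprod_gen_singletons_eq_gen_singleton[OF x y tob_Ob[OF tob_Ob[OF x c] y]])
  fix E
  assume E: "thick_tensor_ideal C E"
  have S: "thick_additive {v \<in> Ob C. tob C v y \<in> E}"
    using thick_additive_vimage[OF exact_endofunctor_tensor_right[OF y]
        thick_tensor_ideal_thick_additive[OF E]] by simp
  have "thick_additive {w \<in> Ob C. tob C x w \<in> {v \<in> Ob C. tob C v y \<in> E}}"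
    by (rule thick_additive_vimage[OF exact_endofunctor_tensor_left[OF x] S])
  then have "thick C {w \<in> Ob C. tob C (tob C x w) y \<in> E}"
    using tob_Ob[OF x] unfolding thick_additive_def by (simp cong: conj_cong)
  then show "(\<forall>w\<in>Ob C. tob C (tob C x w) y \<in> E) \<longleftrightarrow> tob C (tob C x c) y \<in> E"
    using generates c by blast
qed

lemma tprod_gen_singletons_principal:
  assumes "tensor_commutative C \<or> (\<exists>c\<in>Ob C. \<forall>D. thick C D \<and> c \<in> D \<longrightarrow> D = Ob C)"
    and x: "x \<in> Ob C" and y: "y \<in> Ob C"
  shows "\<exists>g\<in>Ob C. tprod C (gen C {x}) (gen C {y}) = gen C {g}"
  using assms(1)
proof
  assume "tensor_commutative C"
  then show ?thesis
    using tprod_gen_singletons_commutative[OF _ x y] tob_Ob[OF x y] by blast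
next
  assume "\<exists>c\<in>Ob C. \<forall>D. thick C D \<and> c \<in> D \<longrightarrow> D = Ob C"
  then obtain c where c: "c \<in> Ob C" and generates: "\<forall>D. thick C D \<and> c \<in> D \<longrightarrow> D = Ob C"
    by blast
  then show ?thesis
    using tprod_gen_singletons_generator[OF c generates x y] tob_Ob[OF tob_Ob[OF x c] y] by blast
qed

lemma Lthick_ideal_lattice:
  assumes "tensor_commutative C \<or> (\<exists>c\<in>Ob C. \<forall>D. thick C D \<and> c \<in> D \<longrightarrow> D = Ob C)"
  shows "ideal_lattice (Lthick C) (\<subseteq>) (tprod C)"
  unfolding ideal_lattice_def Lthick_lsup_Lthick
proof (intro conjI ballI allI impI)
  show "poset_on (Lthick C) (\<subseteq>)"
    unfolding poset_on_def by blast
  show "tprod C a b \<in> Lthick C" for a b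
    by (rule tprod_Lthick)
  show "tprod C (tprod C a b) c = tprod C a (tprod C b c)"
    if "a \<in> Lthick C" "b \<in> Lthick C" "c \<in> Lthick C" for a b c
    using that tprod_assoc unfolding Lthick_def by simp
  show "\<exists>s. is_sup (Lthick C) (\<subseteq>) A s" if "A \<subseteq> Lthick C" for A
    using Lthick_is_sup[OF that] by blast
  show "\<exists>A. A \<subseteq> {c. compact_el (Lthick C) (\<subseteq>) c} \<and> D = lsup (Lthick C) (\<subseteq>) A"
    if "D \<in> Lthick C" for D
    by (rule Lthick_compactly_generated[OF that])
  show "tprod C a (lsup (Lthick C) (\<subseteq>) {b, c}) = lsup (Lthick C) (\<subseteq>) {tprod C a b, tprod C a c}"
    and "tprod C (lsup (Lthick C) (\<subseteq>) {a, b}) c = lsup (Lthick C) (\<subseteq>) {tprod C a c, tprod C b c}"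
    if "a \<in> Lthick C" "b \<in> Lthick C" "c \<in> Lthick C" for a b c
    using tprod_lsup_distrib_left[OF that] tprod_lsup_distrib_right[OF that] by simp_all
  show "compact_el (Lthick C) (\<subseteq>) (Ob C)"
    unfolding Ob_eq_gen_tunit by (rule compact_gen_singleton[OF tunit_Ob])
  show "tprod C (Ob C) a = a" and "tprod C a (Ob C) = a" if "a \<in> Lthick C" for a
    using that tprod_Ob_left tprod_Ob_right unfolding Lthick_def by simp_all
  show "compact_el (Lthick C) (\<subseteq>) (tprod C a b)"
    if ab: "compact_el (Lthick C) (\<subseteq>) a \<and> compact_el (Lthick C) (\<subseteq>) b" for a b
  proof -
    obtain x y where "x \<in> Ob C" "a = gen C {x}" "y \<in> Ob C" "b = gen C {y}"
      using ab compact_imp_gen_singleton by meson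
    then obtain g where "g \<in> Ob C" "tprod C a b = gen C {g}"
      using tprod_gen_singletons_principal[OF assms] by blast
    then show ?thesis
      using compact_gen_singleton by simp
  qed
qed

end

theorem mainTheorem13:
  fixes C :: "('o, 'm) tcat"
  assumes "exact_tensor_category C"
    and "tensor_commutative C \<or> (\<exists>c\<in>Ob C. \<forall>D. thick C D \<and> c \<in> D \<longrightarrow> D = Ob C)"
  shows "ideal_lattice (Lthick C) (\<subseteq>) (tprod C) \<and>
         (\<forall>D\<in>Lthick C. compact_el (Lthick C) (\<subseteq>) D \<longleftrightarrow> (\<exists>x\<in>Ob C. D = gen C {x}))"
proof -
  interpret exact_tensor_cat C
    using assms(1) unfolding exact_tensor_category_def by unfold_locales blast+
  show ?thesis
    using Lthick_ideal_lattice[OF assms(2)] compact_iff_gen_singleton by blast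
qed

end
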